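(* Let $k\ge 2$ be an integer, let $k_0=\lfloor (k-1)/2\rfloor$ (the largest integer with $2k_0\le k-1$) and $k_1=\lfloor (k-2)/2\rfloor$ (the largest integer with $2k_1+2\le k$). Then there exist functions $f_k(\theta,\lambda)$ and $w_k^{2j+1}(s,\lambda)$ ($j=0,\dots,k_1$), each polynomial in $\lambda$, such that for all $\theta$ $$v_k(\theta)=f_k(\theta,\lambda)+\sum_{j=0}^{k_1}\lambda_{2j+1}\,w_k^{2j+1}(\sin\theta,\lambda),$$ where for every $\theta$ the polynomial $f_k(\theta,\cdot)$ belongs to the ideal $(\lambda_2,\lambda_4,\dots,\lambda_{2k_0})\subset\mathbb{R}[\lambda_1,\dots,\lambda_d]$ (the zero ideal if $k_0=0$), and $w_k^{2j+1}(0,\lambda)=0$ for all $\lambda$ and all $j$.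
   Context: Let $d\ge1$, let $\lambda=(\lambda_1,\dots,\lambda_d)$ be real parameters, and $p(x)=\sum_{i=1}^d\lambda_i x^i$. Consider the planar Liénard system $\dot x=y$, $\dot y=-x+p(x)y$. In polar coordinates $x=r\cos\theta$, $y=r\sin\theta$ its orbits satisfy $$\frac{dr}{d\theta}=\frac{r\,p(r\cos\theta)\sin^2\theta}{-1+\sin\theta\cos\theta\,p(r\cos\theta)}.$$ For small $r_0$ let $r(\theta;r_0)$ be the solution of this equation with $r(0;r_0)=r_0$. For each $\theta$, the map $r_0\mapsto r(\theta;r_0)$ is analytic near $0$ and tangent to the identity, and its inverse has the expansion $r_0=r+\sum_{k\ge2}v_k(\theta)r^k$ where $r=r(\theta;r_0)$; set $v_1(\theta)=1$. Each $v_k(\theta)$ is a polynomial in $\lambda$ with real coefficients depending on $\theta$. Convention: $\lambda_i=0$ for $i>d$. *)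

theory Defs
  imports "HOL-Analysis.Analysis"
begin

text \<open>Parameters lambda = (lambda_1,...,lambda_d) are encoded as functions nat => real
  that vanish at index 0 and at all indices > d (this realises the convention
  lambda_i = 0 for i > d).\<close>
definition params :: "nat \<Rightarrow> (nat \<Rightarrow> real) set" where
  "params d = {lam. \<forall>i. (i = 0 \<or> d < i) \<longrightarrow> lam i = 0}"

definition pL :: "nat \<Rightarrow> (nat \<Rightarrow> real) \<Rightarrow> real \<Rightarrow> real" where
  "pL d lam x = (\<Sum>i=1..d. lam i * x ^ i)"

definition polar_den :: "nat \<Rightarrow> (nat \<Rightarrow> real) \<Rightarrow> real \<Rightarrow> real \<Rightarrow> real" where
  "polar_den d lam \<theta> r = -1 + sin \<theta> * cos \<theta> * pL d lam (r * cos \<theta>)"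

definition polar_rhs :: "nat \<Rightarrow> (nat \<Rightarrow> real) \<Rightarrow> real \<Rightarrow> real \<Rightarrow> real" where
  "polar_rhs d lam \<theta> r =
     r * pL d lam (r * cos \<theta>) * (sin \<theta>)\<^sup>2 / polar_den d lam \<theta> r"

definition is_polar_sol ::
  "nat \<Rightarrow> (nat \<Rightarrow> real) \<Rightarrow> real \<Rightarrow> (real \<Rightarrow> real) \<Rightarrow> real set \<Rightarrow> bool" where
  "is_polar_sol d lam r0 \<phi> I \<longleftrightarrow>
     is_interval I \<and> 0 \<in> I \<and> \<phi> 0 = r0 \<and>
     (\<forall>t\<in>I. polar_den d lam t (\<phi> t) \<noteq> 0 \<and>
        (\<phi> has_real_derivative polar_rhs d lam t (\<phi> t)) (at t within I))"

definition inv_expansion :: "nat \<Rightarrow> (nat \<Rightarrow> real) \<Rightarrow> real \<Rightarrow> (nat \<Rightarrow> real) \<Rightarrow> bool" where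
  "inv_expansion d lam \<theta> v \<longleftrightarrow>
     (\<exists>\<epsilon>>0. \<forall>r0. \<bar>r0\<bar> < \<epsilon> \<longrightarrow>
        (\<exists>\<phi> I. is_polar_sol d lam r0 \<phi> I \<and> \<theta> \<in> I \<and>
                 (\<lambda>k. v k * (\<phi> \<theta>) ^ k) sums r0))"

definition v_coeff :: "nat \<Rightarrow> (nat \<Rightarrow> real) \<Rightarrow> real \<Rightarrow> nat \<Rightarrow> real" where
  "v_coeff d lam \<theta> k = (THE v. inv_expansion d lam \<theta> v) k"

definition poly_in :: "nat \<Rightarrow> ((nat \<Rightarrow> real) \<Rightarrow> real) \<Rightarrow> bool" where
  "poly_in d P \<longleftrightarrow> (\<exists>M c. finite M \<and>
     (\<forall>lam. P lam = (\<Sum>m\<in>M. c m * (\<Prod>i\<in>{1..d}. lam i ^ m i))))"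

end

theory Submission
  imports Defs "HOL-Real_Asymp.Real_Asymp"
begin

definition monom_eval :: "nat \<Rightarrow> (nat \<Rightarrow> real) \<Rightarrow> (nat \<Rightarrow> nat) \<Rightarrow> real" where
  "monom_eval d lam m = (\<Prod>i\<in>{1..d}. lam i ^ m i)"

definition cont_coeff_poly :: "nat \<Rightarrow> (real \<Rightarrow> (nat \<Rightarrow> real) \<Rightarrow> real) \<Rightarrow> bool" where
  "cont_coeff_poly d Q \<longleftrightarrow> (\<exists>M c. finite M \<and> (\<forall>m\<in>M. continuous_on UNIV (c m)) \<and>
      (\<forall>t lam. Q t lam = (\<Sum>m\<in>M. c m t * monom_eval d lam m)))"

lemma monom_eval_add: "monom_eval d lam (\<lambda>i. a i + b i) = monom_eval d lam a * monom_eval d lam b"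
  unfolding monom_eval_def by (simp add: power_add prod.distrib)

lemma cont_coeff_polyE:
  assumes "cont_coeff_poly d Q"
  obtains M c where "finite M" "\<And>m. m \<in> M \<Longrightarrow> continuous_on UNIV (c m)"
    "\<And>t lam. Q t lam = (\<Sum>m\<in>M. c m t * monom_eval d lam m)"
  using assms unfolding cont_coeff_poly_def by blast

lemma cont_coeff_poly_sum_monoms:
  assumes "finite S" "\<And>x. x \<in> S \<Longrightarrow> continuous_on UNIV (a x)"
  shows "cont_coeff_poly d (\<lambda>t lam. \<Sum>x\<in>S. a x t * monom_eval d lam (e x))"
proof -
  define c where "c m t = (\<Sum>x\<in>{x\<in>S. e x = m}. a x t)" for m t
  have "(\<Sum>x\<in>S. a x t * monom_eval d lam (e x)) = (\<Sum>m\<in>e ` S. c m t * monom_eval d lam m)" for t lam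
  proof -
    have "(\<Sum>x\<in>S. a x t * monom_eval d lam (e x))
        = (\<Sum>m\<in>e ` S. \<Sum>x\<in>{x\<in>S. e x = m}. a x t * monom_eval d lam (e x))"
      by (rule sum.image_gen[OF assms(1)])
    also have "\<dots> = (\<Sum>m\<in>e ` S. c m t * monom_eval d lam m)"
      unfolding c_def sum_distrib_right by (intro sum.cong refl) auto
    finally show ?thesis .
  qed
  moreover have "\<forall>m\<in>e ` S. continuous_on UNIV (c m)"
    unfolding c_def using assms by (auto intro!: continuous_on_sum)
  ultimately show ?thesis unfolding cont_coeff_poly_def using assms(1) by blast
qed

lemma cont_coeff_poly_cong:
  "cont_coeff_poly d Q \<Longrightarrow> (\<And>t lam. Q t lam = Q' t lam) \<Longrightarrow> cont_coeff_poly d Q'"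
  by (simp add: cont_coeff_poly_def)

lemma cont_coeff_poly_const: "continuous_on UNIV g \<Longrightarrow> cont_coeff_poly d (\<lambda>t lam. g t)"
  using cont_coeff_poly_sum_monoms[of "{()}" "\<lambda>_. g" d "\<lambda>_ _. 0"] by (simp add: monom_eval_def)

lemma cont_coeff_poly_var:
  assumes "i \<in> {1..d}"
  shows "cont_coeff_poly d (\<lambda>t lam. lam i)"
proof -
  have "monom_eval d lam (\<lambda>j. if j = i then 1 else 0) = lam i" for lam
  proof -
    have "monom_eval d lam (\<lambda>j. if j = i then 1 else 0) = (\<Prod>j\<in>{1..d}. if j = i then lam i else 1)"
      unfolding monom_eval_def by (intro prod.cong) auto
    also have "\<dots> = lam i" using assms by (subst prod.delta) auto
    finally show ?thesis .
  qed
  then show ?thesis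
    using cont_coeff_poly_sum_monoms[of "{()}" "\<lambda>_ _. 1" d "\<lambda>_ j. if j = i then 1 else 0"] by simp
qed

lemma cont_coeff_poly_add:
  assumes "cont_coeff_poly d P" "cont_coeff_poly d Q"
  shows "cont_coeff_poly d (\<lambda>t lam. P t lam + Q t lam)"
proof -
  obtain M c where M: "finite M" "\<And>m. m \<in> M \<Longrightarrow> continuous_on UNIV (c m)"
    "\<And>t lam. P t lam = (\<Sum>m\<in>M. c m t * monom_eval d lam m)"
    using cont_coeff_polyE[OF assms(1)] by blast
  obtain N e where N: "finite N" "\<And>m. m \<in> N \<Longrightarrow> continuous_on UNIV (e m)"
    "\<And>t lam. Q t lam = (\<Sum>m\<in>N. e m t * monom_eval d lam m)"
    using cont_coeff_polyE[OF assms(2)] by blast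
  let ?S = "Inl ` M \<union> Inr ` N"
  let ?a = "case_sum c e"
  let ?e = "case_sum id id"
  have "cont_coeff_poly d (\<lambda>t lam. \<Sum>x\<in>?S. ?a x t * monom_eval d lam (?e x))"
    by (rule cont_coeff_poly_sum_monoms) (use M N in auto)
  moreover have "(\<Sum>x\<in>?S. ?a x t * monom_eval d lam (?e x)) = P t lam + Q t lam" for t lam
    using M N by (subst sum.union_disjoint) (auto simp: sum.reindex)
  ultimately show ?thesis by (rule cont_coeff_poly_cong)
qed

lemma cont_coeff_poly_mult:
  assumes "cont_coeff_poly d P" "cont_coeff_poly d Q"
  shows "cont_coeff_poly d (\<lambda>t lam. P t lam * Q t lam)"
proof -
  obtain M c where M: "finite M" "\<And>m. m \<in> M \<Longrightarrow> continuous_on UNIV (c m)"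
    "\<And>t lam. P t lam = (\<Sum>m\<in>M. c m t * monom_eval d lam m)"
    using cont_coeff_polyE[OF assms(1)] by blast
  obtain N e where N: "finite N" "\<And>m. m \<in> N \<Longrightarrow> continuous_on UNIV (e m)"
    "\<And>t lam. Q t lam = (\<Sum>m\<in>N. e m t * monom_eval d lam m)"
    using cont_coeff_polyE[OF assms(2)] by blast
  have "cont_coeff_poly d (\<lambda>t lam. \<Sum>x\<in>M \<times> N.
      (c (fst x) t * e (snd x) t) * monom_eval d lam (\<lambda>i. fst x i + snd x i))"
    by (rule cont_coeff_poly_sum_monoms) (use M N in \<open>auto intro!: continuous_on_mult\<close>)
  moreover have "(\<Sum>x\<in>M \<times> N. (c (fst x) t * e (snd x) t) * monom_eval d lam (\<lambda>i. fst x i + snd x i))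
      = P t lam * Q t lam" for t lam
    unfolding M(3) N(3) sum_product sum.cartesian_product monom_eval_add
    by (intro sum.cong refl) (auto simp: algebra_simps)
  ultimately show ?thesis by (rule cont_coeff_poly_cong)
qed

lemma cont_coeff_poly_sum:
  assumes "finite S" "\<And>x. x \<in> S \<Longrightarrow> cont_coeff_poly d (Q x)"
  shows "cont_coeff_poly d (\<lambda>t lam. \<Sum>x\<in>S. Q x t lam)"
  using assms
proof (induction S rule: finite_induct)
  case empty
  then show ?case using cont_coeff_poly_const[of "\<lambda>_. 0" d] by simp
next
  case (insert x F)
  then show ?case using cont_coeff_poly_add[of d "Q x" "\<lambda>t lam. \<Sum>x\<in>F. Q x t lam"] by simp
qed

lemma cont_coeff_poly_cmult:
  "continuous_on UNIV g \<Longrightarrow> cont_coeff_poly d Q \<Longrightarrow> cont_coeff_poly d (\<lambda>t lam. g t * Q t lam)"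
  using cont_coeff_poly_mult[OF cont_coeff_poly_const] by blast

lemma cont_coeff_poly_continuous:
  assumes "cont_coeff_poly d Q"
  shows "continuous_on UNIV (\<lambda>t. Q t lam)"
proof -
  obtain M c where M: "finite M" "\<And>m. m \<in> M \<Longrightarrow> continuous_on UNIV (c m)"
    "\<And>t lam. Q t lam = (\<Sum>m\<in>M. c m t * monom_eval d lam m)"
    using cont_coeff_polyE[OF assms] by blast
  show ?thesis unfolding M(3) using M by (auto intro!: continuous_intros)
qed

lemma poly_in_iff_cont_coeff_poly: "poly_in d P \<longleftrightarrow> cont_coeff_poly d (\<lambda>t. P)"
proof
  assume "poly_in d P"
  then obtain M c where "finite M" "\<And>lam. P lam = (\<Sum>m\<in>M. c m * monom_eval d lam m)"
    unfolding poly_in_def monom_eval_def by blast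
  then show "cont_coeff_poly d (\<lambda>t. P)"
    unfolding cont_coeff_poly_def by (intro exI[of _ M] exI[of _ "\<lambda>m t. c m"]) auto
next
  assume "cont_coeff_poly d (\<lambda>t. P)"
  then obtain M c where "finite M" "\<And>lam. P lam = (\<Sum>m\<in>M. c m 0 * monom_eval d lam m)"
    unfolding cont_coeff_poly_def by blast
  then show "poly_in d P"
    unfolding poly_in_def monom_eval_def by (intro exI[of _ M] exI[of _ "\<lambda>m. c m 0"]) auto
qed

lemma cont_coeff_poly_poly_in:
  assumes "cont_coeff_poly d Q"
  shows "poly_in d (Q t)"
proof -
  obtain M c where "finite M" "\<And>lam. Q t lam = (\<Sum>m\<in>M. c m t * monom_eval d lam m)"
    using assms unfolding cont_coeff_poly_def by blast
  then show ?thesis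
    unfolding poly_in_def monom_eval_def by (intro exI[of _ M] exI[of _ "\<lambda>m. c m t"]) auto
qed

lemma poly_in_monom_eval:
  "poly_in d P \<longleftrightarrow> (\<exists>M c. finite M \<and> (\<forall>lam. P lam = (\<Sum>m\<in>M. c m * monom_eval d lam m)))"
  unfolding poly_in_def monom_eval_def ..

lemma poly_in_0: "poly_in d (\<lambda>_. 0)"
  unfolding poly_in_monom_eval by (intro exI[of _ "{}"]) simp

lemma poly_in_diff:
  assumes "poly_in d P" "poly_in d Q"
  shows "poly_in d (\<lambda>lam. P lam - Q lam)"
proof -
  have "cont_coeff_poly d (\<lambda>t lam. P lam + (- 1) * Q lam)"
    using assms unfolding poly_in_iff_cont_coeff_poly
    by (intro cont_coeff_poly_add cont_coeff_poly_cmult) auto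
  then show ?thesis
    unfolding poly_in_iff_cont_coeff_poly by (rule cont_coeff_poly_cong) simp
qed

definition zero_on :: "nat set \<Rightarrow> (nat \<Rightarrow> real) \<Rightarrow> nat \<Rightarrow> real" where
  "zero_on Z lam = (\<lambda>j. if j \<in> Z then 0 else lam j)"

lemma zero_on_insert: "zero_on (insert x Z) lam = (zero_on Z lam)(x := 0)"
  by (auto simp: zero_on_def)

lemma poly_in_zero_on:
  assumes "poly_in d P"
  shows "poly_in d (\<lambda>lam. P (zero_on Z lam))"
proof -
  obtain M c where M: "finite M" "\<And>lam. P lam = (\<Sum>m\<in>M. c m * monom_eval d lam m)"
    using assms unfolding poly_in_monom_eval by blast
  define killed where "killed m \<longleftrightarrow> (\<exists>i\<in>Z \<inter> {1..d}. m i \<noteq> 0)" for m :: "nat \<Rightarrow> nat"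
  have "monom_eval d (zero_on Z lam) m = (if killed m then 0 else monom_eval d lam m)" for lam m
  proof (cases "killed m")
    case True
    then obtain i where i: "i \<in> Z" "i \<in> {1..d}" "m i \<noteq> 0" by (auto simp: killed_def)
    then have "(\<Prod>j\<in>{1..d}. zero_on Z lam j ^ m j) = 0"
      by (intro prod_zero) (auto simp: zero_on_def intro!: bexI[of _ i])
    then show ?thesis using True by (simp add: monom_eval_def)
  next
    case False
    then have "(\<Prod>j\<in>{1..d}. zero_on Z lam j ^ m j) = (\<Prod>j\<in>{1..d}. lam j ^ m j)"
      by (intro prod.cong) (auto simp: zero_on_def killed_def)
    then show ?thesis using False by (simp add: monom_eval_def)
  qed
  then have "P (zero_on Z lam) = (\<Sum>m\<in>M. (if killed m then 0 else c m) * monom_eval d lam m)" for lam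
    unfolding M(2) by (intro sum.cong) auto
  then show ?thesis
    unfolding poly_in_monom_eval using M(1)
    by (intro exI[of _ M] exI[of _ "\<lambda>m. if killed m then 0 else c m"]) auto
qed

lemma monom_eval_remove:
  "i \<in> {1..d} \<Longrightarrow> monom_eval d lam m = lam i ^ m i * (\<Prod>j\<in>{1..d}-{i}. lam j ^ m j)"
  unfolding monom_eval_def by (subst prod.remove[of _ i]) auto

lemma monom_eval_upd_zero:
  "monom_eval d (lam(i := 0)) m = (if i \<in> {1..d} \<and> m i \<noteq> 0 then 0 else monom_eval d lam m)"
proof (cases "i \<in> {1..d}")
  case True
  then show ?thesis by (auto simp: monom_eval_remove intro!: prod.cong)
qed (auto simp: monom_eval_def intro!: prod.cong)

lemma monom_eval_lower:
  assumes "i \<in> {1..d}" "m i \<noteq> 0"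
  shows "monom_eval d lam m = lam i * monom_eval d lam (m(i := m i - 1))"
proof -
  have "(\<Prod>j\<in>{1..d}-{i}. lam j ^ (m(i := m i - 1)) j) = (\<Prod>j\<in>{1..d}-{i}. lam j ^ m j)"
    by (intro prod.cong) auto
  moreover have "lam i ^ m i = lam i * lam i ^ (m i - 1)"
    using assms(2) by (cases "m i") auto
  ultimately show ?thesis unfolding monom_eval_remove[OF assms(1)] by simp
qed

lemma poly_in_diff_upd_zero:
  assumes "poly_in d P"
  obtains g where "poly_in d g" "\<And>lam. P lam - P (lam(i := 0)) = lam i * g lam"
proof -
  obtain M c where M: "finite M" "\<And>lam. P lam = (\<Sum>m\<in>M. c m * monom_eval d lam m)"
    using assms unfolding poly_in_monom_eval by blast
  define M' where "M' = {m\<in>M. i \<in> {1..d} \<and> m i \<noteq> 0}"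
  define g where "g lam = (\<Sum>m\<in>M'. c m * monom_eval d lam (m(i := m i - 1)))" for lam
  have "poly_in d g"
    unfolding poly_in_iff_cont_coeff_poly g_def[abs_def] using M(1)
    by (intro cont_coeff_poly_sum_monoms[of _ "\<lambda>m _. c m", unfolded id_def]) (auto simp: M'_def)
  moreover have "P lam - P (lam(i := 0)) = lam i * g lam" for lam
  proof -
    have "P lam - P (lam(i := 0))
        = (\<Sum>m\<in>M. if i \<in> {1..d} \<and> m i \<noteq> 0 then c m * monom_eval d lam m else 0)"
      unfolding M(2) sum_subtractf[symmetric] by (intro sum.cong) (auto simp: monom_eval_upd_zero)
    also have "\<dots> = (\<Sum>m\<in>M'. c m * monom_eval d lam m)"
      unfolding M'_def using M(1) by (rule sum.inter_filter[symmetric])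
    also have "\<dots> = lam i * g lam"
      unfolding g_def sum_distrib_left by (intro sum.cong) (auto simp: M'_def monom_eval_lower)
    finally show ?thesis .
  qed
  ultimately show ?thesis using that by blast
qed

lemma poly_in_vanishing_ideal:
  assumes "finite I" "poly_in d P" "\<And>lam. P (zero_on (a ` I) lam) = 0"
  obtains g where "\<And>i. i \<in> I \<Longrightarrow> poly_in d (g i)" "\<And>lam. P lam = (\<Sum>i\<in>I. lam (a i) * g i lam)"
proof -
  have "\<exists>g. (\<forall>i\<in>I. poly_in d (g i)) \<and>
      (\<forall>lam. P lam - P (zero_on (a ` I) lam) = (\<Sum>i\<in>I. lam (a i) * g i lam))"
    using assms(1)
  proof (induction I rule: finite_induct)
    case empty
    then show ?case by (simp add: zero_on_def)
  next
    case (insert x I)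
    then obtain g where g: "\<forall>i\<in>I. poly_in d (g i)"
      "\<forall>lam. P lam - P (zero_on (a ` I) lam) = (\<Sum>i\<in>I. lam (a i) * g i lam)" by blast
    obtain h where h: "poly_in d h" "\<And>lam. P lam - P (lam(a x := 0)) = lam (a x) * h lam"
      using poly_in_diff_upd_zero[OF assms(2)] by metis
    define h' where "h' lam = (if a x \<in> a ` I then 0 else h (zero_on (a ` I) lam))" for lam
    have "poly_in d h'"
      using poly_in_zero_on[OF h(1)] by (cases "a x \<in> a ` I") (auto simp: h'_def poly_in_monom_eval)
    moreover have "P lam - P (zero_on (a ` insert x I) lam)
        = (\<Sum>i\<in>I. lam (a i) * g i lam) + lam (a x) * h' lam" for lam
    proof (cases "a x \<in> a ` I")
      case True
      then have "a ` insert x I = a ` I" by auto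
      then show ?thesis using g(2) True by (simp add: h'_def)
    next
      case False
      let ?z = "zero_on (a ` I) lam"
      have "?z (a x) = lam (a x)" using False by (simp add: zero_on_def)
      have "P lam - P (zero_on (a ` insert x I) lam) = (P lam - P ?z) + (P ?z - P (?z(a x := 0)))"
        by (simp add: zero_on_insert)
      also have "\<dots> = (\<Sum>i\<in>I. lam (a i) * g i lam) + lam (a x) * h' lam"
        using g(2) h(2)[of ?z] \<open>?z (a x) = lam (a x)\<close> False by (simp add: h'_def)
      finally show ?thesis .
    qed
    ultimately show ?case
      using insert g(1) by (intro exI[of _ "g(x := h')"]) (auto intro!: sum.cong)
  qed
  then show ?thesis using assms(3) that by auto
qed

definition antideriv :: "(real \<Rightarrow> real) \<Rightarrow> real \<Rightarrow> real" where
  "antideriv g x = integral {0..x} g - integral {x..0} g"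

lemma antideriv_0 [simp]: "antideriv g 0 = 0"
  by (simp add: antideriv_def)

lemma antideriv_eq_integral_diff:
  assumes g: "continuous_on UNIV g" and a: "a \<le> 0" "a \<le> y"
  shows "antideriv g y = integral {a..y} g - integral {a..0} g"
proof -
  have int: "g integrable_on {u..v}" for u v
    by (rule integrable_continuous_interval) (rule continuous_on_subset[OF g], auto)
  show ?thesis
  proof (cases "0 \<le> y")
    case True
    have "integral {y..0} g = 0"
      using True by (cases "y = 0") auto
    moreover have "integral {a..0} g + integral {0..y} g = integral {a..y} g"
      by (rule Henstock_Kurzweil_Integration.integral_combine) (use True a int in auto)
    ultimately show ?thesis unfolding antideriv_def by linarith
  next
    case False
    have "integral {0..y} g = 0"
      using False by auto
    moreover have "integral {a..y} g + integral {y..0} g = integral {a..0} g"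
      by (rule Henstock_Kurzweil_Integration.integral_combine) (use False a int in auto)
    ultimately show ?thesis unfolding antideriv_def by linarith
  qed
qed

lemma antideriv_has_real_derivative:
  assumes g: "continuous_on UNIV g"
  shows "(antideriv g has_real_derivative g x) (at x)"
proof -
  define a where "a = min x 0 - 1"
  have "((\<lambda>y. integral {a..y} g) has_real_derivative g x) (at x within {a..x+1})"
    by (rule integral_has_real_derivative) (auto intro: continuous_on_subset[OF g] simp: a_def)
  moreover have "at x within {a..x+1} = at x"
    by (rule at_within_interior) (simp add: a_def)
  ultimately have "((\<lambda>y. integral {a..y} g) has_real_derivative g x) (at x)"
    by simp
  from DERIV_diff[OF this DERIV_const]
  have "((\<lambda>y. integral {a..y} g - integral {a..0} g) has_real_derivative g x) (at x)"
    by simp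
  then show ?thesis
  proof (rule has_field_derivative_transform_within_open[of _ _ _ "{a<..}"])
    fix y assume "y \<in> {a<..}"
    then show "integral {a..y} g - integral {a..0} g = antideriv g y"
      using antideriv_eq_integral_diff[OF g, of a y] by (simp add: a_def)
  qed (auto simp: a_def)
qed

lemma antideriv_continuous: "continuous_on UNIV g \<Longrightarrow> continuous_on UNIV (antideriv g)"
  by (meson DERIV_isCont antideriv_has_real_derivative continuous_at_imp_continuous_on)

lemma antideriv_sum:
  assumes "finite M" "\<And>m. m \<in> M \<Longrightarrow> continuous_on UNIV (c m)"
  shows "antideriv (\<lambda>u. \<Sum>m\<in>M. c m u * k m) t = (\<Sum>m\<in>M. antideriv (c m) t * k m)"
proof -
  have int: "c m integrable_on {u..v}" if "m \<in> M" for u v m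
    by (rule integrable_continuous_interval) (rule continuous_on_subset[OF assms(2)[OF that]], auto)
  have "integral {u..v} (\<lambda>u. \<Sum>m\<in>M. c m u * k m) = (\<Sum>m\<in>M. integral {u..v} (c m) * k m)" for u v
    using assms(1) int by (subst integral_sum) (auto intro: integrable_on_mult_left)
  then show ?thesis unfolding antideriv_def by (simp add: sum_subtractf left_diff_distrib)
qed

lemma cont_coeff_poly_antideriv:
  assumes "cont_coeff_poly d Q"
  shows "cont_coeff_poly d (\<lambda>t lam. antideriv (\<lambda>u. Q u lam) t)"
proof -
  obtain M c where M: "finite M" "\<And>m. m \<in> M \<Longrightarrow> continuous_on UNIV (c m)"
    "\<And>t lam. Q t lam = (\<Sum>m\<in>M. c m t * monom_eval d lam m)"
    using cont_coeff_polyE[OF assms] by blast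
  have "cont_coeff_poly d (\<lambda>t lam. \<Sum>m\<in>M. antideriv (c m) t * monom_eval d lam m)"
    using cont_coeff_poly_sum_monoms[of M "\<lambda>m. antideriv (c m)" d id] M
    by (auto intro: antideriv_continuous)
  then show ?thesis
    by (rule cont_coeff_poly_cong) (simp add: M(3) antideriv_sum[OF M(1,2)])
qed

lemma sum_restrict_support:
  fixes a h :: "nat \<Rightarrow> real"
  assumes "\<And>i. i \<notin> {1..N} \<Longrightarrow> a i = 0"
  shows "(\<Sum>i=1..n. a i * h i) = (\<Sum>i=1..N. if i \<le> n then a i * h i else 0)"
proof -
  have pw: "a i * h i = (if i \<le> N then a i * h i else 0)" if "i \<in> {1..n}" for i
    using assms[of i] that by auto
  have "(\<Sum>i=1..n. a i * h i) = (\<Sum>i=1..n. if i \<le> N then a i * h i else 0)"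
    by (rule sum.cong[OF refl pw])
  also have "\<dots> = (\<Sum>i\<in>{i\<in>{1..n}. i \<le> N}. a i * h i)"
    by (rule sum.inter_filter[symmetric]) simp
  also have "{i\<in>{1..n}. i \<le> N} = {i\<in>{1..N}. i \<le> n}" by auto
  also have "(\<Sum>i\<in>{i\<in>{1..N}. i \<le> n}. a i * h i) = (\<Sum>i=1..N. if i \<le> n then a i * h i else 0)"
    by (rule sum.inter_filter) simp
  finally show ?thesis .
qed

lemma sums_shift_right:
  fixes f :: "nat \<Rightarrow> real"
  assumes "f sums S"
  shows "(\<lambda>n. if k \<le> n then f (n - k) else 0) sums S"
  by (rule sums_zero_iff_shift[of k "\<lambda>n. if k \<le> n then f (n - k) else 0" S, THEN iffD1])
    (simp_all add: assms)

lemma sum_le_bound_mult: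
  fixes c :: "nat \<Rightarrow> real"
  assumes "\<And>i. i \<in> A \<Longrightarrow> \<bar>x i\<bar> \<le> c i * X" "(\<Sum>i\<in>A. c i) \<le> L" "0 \<le> X"
  shows "(\<Sum>i\<in>A. \<bar>x i\<bar>) \<le> L * X"
proof -
  have "(\<Sum>i\<in>A. \<bar>x i\<bar>) \<le> (\<Sum>i\<in>A. c i) * X"
    unfolding sum_distrib_right by (intro sum_mono assms(1))
  also have "\<dots> \<le> L * X" using assms(2,3) by (rule mult_right_mono)
  finally show ?thesis .
qed

text \<open>The coefficients of the power series \<open>1 / (1 - \<Sum>\<^sub>i\<^sub>\<ge>\<^sub>1 a\<^sub>i r\<^sup>i)\<close>.\<close>
fun recip_coeff :: "(nat \<Rightarrow> real) \<Rightarrow> nat \<Rightarrow> real" where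
  "recip_coeff a 0 = 1"
| "recip_coeff a (Suc n) = (\<Sum>i=1..Suc n. a i * recip_coeff a (Suc n - i))"

lemma recip_coeff_cong:
  "(\<And>i. i \<in> {1..n} \<Longrightarrow> a i = b i) \<Longrightarrow> recip_coeff a n = recip_coeff b n"
proof (induction n rule: less_induct)
  case (less n)
  then show ?case
    by (cases n) (auto intro!: sum.cong)
qed

lemma recip_coeff_bound:
  assumes c: "\<And>i. \<bar>a i\<bar> \<le> c i" and L: "\<And>n. (\<Sum>i=1..n. c i) \<le> L"
  shows "\<bar>recip_coeff a n\<bar> \<le> (1 + L) ^ n"
proof (induction n rule: less_induct)
  case (less n)
  have L0: "0 \<le> L" using L[of 0] by simp
  show ?case
  proof (cases n)
    case (Suc m)
    have "\<bar>recip_coeff a n\<bar> \<le> (\<Sum>i=1..Suc m. \<bar>a i * recip_coeff a (Suc m - i)\<bar>)"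
      using Suc sum_abs by (simp del: sum.cl_ivl_Suc)
    also have "\<dots> \<le> L * (1 + L) ^ m"
    proof (rule sum_le_bound_mult[OF _ L])
      fix i assume i: "i \<in> {1..Suc m}"
      have "Suc m - i < n" "Suc m - i \<le> m" using i Suc by auto
      then have "\<bar>recip_coeff a (Suc m - i)\<bar> \<le> (1 + L) ^ m"
        using less.IH[of "Suc m - i"] power_increasing[of "Suc m - i" m "1 + L"] L0 by auto
      then show "\<bar>a i * recip_coeff a (Suc m - i)\<bar> \<le> c i * (1 + L) ^ m"
        unfolding abs_mult using c[of i] by (intro mult_mono) auto
    qed (use L0 in simp)
    also have "\<dots> \<le> (1 + L) ^ n" using Suc L0 by simp
    finally show ?thesis .
  qed simp
qed

lemma abs_recip_coeff_power_le:
  assumes c: "\<And>i. \<bar>a i\<bar> \<le> c i" and L: "\<And>n. (\<Sum>i=1..n. c i) \<le> L"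
    and r: "\<bar>r\<bar> * (1 + L) \<le> 1/2"
  shows "\<bar>recip_coeff a n * r ^ n\<bar> \<le> (1/2) ^ n"
proof -
  have "\<bar>recip_coeff a n * r ^ n\<bar> \<le> (1 + L) ^ n * \<bar>r\<bar> ^ n"
    unfolding abs_mult power_abs by (rule mult_right_mono[OF recip_coeff_bound[OF c L]]) simp
  also have "\<dots> = (\<bar>r\<bar> * (1 + L)) ^ n" by (simp add: power_mult_distrib mult.commute)
  also have "\<dots> \<le> (1/2) ^ n" using r L[of 0] by (intro power_mono) auto
  finally show ?thesis .
qed

lemma recip_coeff_power_eq:
  assumes "\<And>i. i \<notin> {1..N} \<Longrightarrow> a i = 0"
  shows "recip_coeff a n * r ^ n = (if n = 0 then 1 else 0)
    + (\<Sum>i=1..N. if i \<le> n then a i * (r ^ i * (recip_coeff a (n - i) * r ^ (n - i))) else 0)"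
proof (cases n)
  case (Suc m)
  have "recip_coeff a n * r ^ n = (\<Sum>i=1..n. a i * recip_coeff a (n - i)) * r ^ n"
    using Suc by (simp del: sum.cl_ivl_Suc)
  also have "\<dots> = (\<Sum>i=1..n. a i * (r ^ i * (recip_coeff a (n - i) * r ^ (n - i))))"
    unfolding sum_distrib_right
  proof (rule sum.cong[OF refl])
    fix i assume "i \<in> {1..n}"
    then have "r ^ n = r ^ i * r ^ (n - i)" by (simp add: power_add[symmetric])
    then show "a i * recip_coeff a (n - i) * r ^ n = a i * (r ^ i * (recip_coeff a (n - i) * r ^ (n - i)))"
      by simp
  qed
  also have "\<dots> = (\<Sum>i=1..N. if i \<le> n then a i * (r ^ i * (recip_coeff a (n - i) * r ^ (n - i))) else 0)"
    by (rule sum_restrict_support[OF assms])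
  finally show ?thesis using Suc by simp
qed simp

text \<open>With \<open>S = \<Sum>\<^sub>n f\<^sub>n\<close>, the recursion says \<open>S = 1 + A(r) S\<close>.\<close>
lemma recip_coeff_sums:
  assumes supp: "\<And>i. i \<notin> {1..N} \<Longrightarrow> a i = 0"
    and c: "\<And>i. \<bar>a i\<bar> \<le> c i" and L: "\<And>n. (\<Sum>i=1..n. c i) \<le> L"
    and r: "\<bar>r\<bar> * (1 + L) \<le> 1/2"
  shows "(\<lambda>n. recip_coeff a n * r ^ n) sums (1 / (1 - (\<Sum>i=1..N. a i * r ^ i)))"
proof -
  define f where "f n = recip_coeff a n * r ^ n" for n
  define A where "A = (\<Sum>i=1..N. a i * r ^ i)"
  have L0: "0 \<le> L" using L[of 0] by simp
  have "summable f"
    by (rule summable_comparison_test'[of "\<lambda>n. (1/2) ^ n"])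
      (use abs_recip_coeff_power_le[OF c L r] in \<open>auto simp: f_def\<close>)
  then have f: "f sums suminf f" by (rule summable_sums)
  have shifted: "(\<lambda>n. if i \<le> n then a i * (r ^ i * f (n - i)) else 0) sums (a i * (r ^ i * suminf f))"
    for i
    using sums_shift_right[OF sums_mult[OF sums_mult[OF f, of "r ^ i"], of "a i"], of i] by simp
  have one: "(\<lambda>n. if n = 0 then 1 else 0 :: real) sums 1"
    using sums_single[of 0 "\<lambda>_. 1 :: real"] by simp
  have "f n = (if n = 0 then 1 else 0) + (\<Sum>i=1..N. if i \<le> n then a i * (r ^ i * f (n - i)) else 0)" for n
    unfolding f_def by (rule recip_coeff_power_eq[OF supp])
  from iffD2[OF sums_cong[OF this] sums_add[OF one sums_sum[OF shifted]]]
  have "f sums (1 + A * suminf f)"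
    by (simp add: A_def sum_distrib_right mult.assoc)
  with f have "suminf f = 1 + A * suminf f"
    by (rule sums_unique2)
  then have S: "(1 - A) * suminf f = 1"
    unfolding left_diff_distrib by linarith
  have r': "\<bar>r\<bar> + \<bar>r\<bar> * L \<le> 1/2" "0 \<le> \<bar>r\<bar> * L"
    using r L0 by (simp_all add: distrib_left)
  have "\<bar>A\<bar> \<le> (\<Sum>i=1..N. \<bar>a i * r ^ i\<bar>)" unfolding A_def by (rule sum_abs)
  also have "\<dots> \<le> L * \<bar>r\<bar>"
  proof (rule sum_le_bound_mult[OF _ L])
    fix i assume "i \<in> {1..N}"
    then have "\<bar>r\<bar> ^ i \<le> \<bar>r\<bar> ^ 1" using r' by (intro power_decreasing) auto
    then show "\<bar>a i * r ^ i\<bar> \<le> c i * \<bar>r\<bar>"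
      unfolding abs_mult power_abs using c[of i] by (intro mult_mono) auto
  qed simp
  finally have "A \<noteq> 1" using r' by (auto simp: mult.commute)
  with S have "suminf f = 1 / (1 - A)" by (simp add: field_simps)
  with f show ?thesis unfolding f_def A_def by simp
qed

lemma cont_coeff_poly_recip_coeff:
  assumes "\<And>i. cont_coeff_poly d (\<lambda>t lam. a t lam i)"
  shows "cont_coeff_poly d (\<lambda>t lam. recip_coeff (a t lam) n)"
proof (induction n rule: less_induct)
  case (less n)
  show ?case
  proof (cases n)
    case 0
    then show ?thesis using cont_coeff_poly_const[of "\<lambda>_. 1"] by simp
  next
    case (Suc m)
    have "cont_coeff_poly d (\<lambda>t lam. \<Sum>i=1..Suc m. a t lam i * recip_coeff (a t lam) (Suc m - i))"
      using less.IH Suc by (intro cont_coeff_poly_sum cont_coeff_poly_mult assms) auto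
    then show ?thesis using Suc by simp
  qed
qed

lemma abs_mult_le_of_abs_le_1:
  fixes s b c :: real
  assumes "\<bar>s\<bar> \<le> 1" "\<bar>b\<bar> \<le> c"
  shows "\<bar>s * b\<bar> \<le> c"
proof -
  have "\<bar>s\<bar> * \<bar>b\<bar> \<le> 1 * c" using assms by (intro mult_mono) auto
  then show ?thesis by (simp add: abs_mult)
qed

text \<open>The coefficients of \<open>- s\<^sup>2 r A(r) / (1 - s B(r))\<close>, where \<open>A(r) = \<Sum>\<^sub>i \<alpha>\<^sub>i r\<^sup>i\<close>
  and \<open>B(r) = \<Sum>\<^sub>i \<beta>\<^sub>i r\<^sup>i\<close>.\<close>
definition rhs_coeff :: "real \<Rightarrow> (nat \<Rightarrow> real) \<Rightarrow> (nat \<Rightarrow> real) \<Rightarrow> nat \<Rightarrow> real" where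
  "rhs_coeff s \<alpha> \<beta> m = - s\<^sup>2 * (\<Sum>i=1..m-1. \<alpha> i * recip_coeff (\<lambda>i. s * \<beta> i) (m - 1 - i))"

lemma rhs_coeff_0 [simp]: "rhs_coeff s \<alpha> \<beta> 0 = 0"
  and rhs_coeff_1 [simp]: "rhs_coeff s \<alpha> \<beta> (Suc 0) = 0"
  by (simp_all add: rhs_coeff_def)

lemma rhs_coeff_cong:
  assumes "\<And>i. i < m \<Longrightarrow> \<alpha> i = \<alpha>' i" "\<And>i. i < m \<Longrightarrow> \<beta> i = \<beta>' i"
  shows "rhs_coeff s \<alpha> \<beta> m = rhs_coeff s \<alpha>' \<beta>' m"
proof -
  have "\<alpha> i * recip_coeff (\<lambda>i. s * \<beta> i) (m - 1 - i) = \<alpha>' i * recip_coeff (\<lambda>i. s * \<beta>' i) (m - 1 - i)"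
    if "i \<in> {1..m-1}" for i
    using that assms by (intro arg_cong2[where f = "(*)"] recip_coeff_cong) auto
  then have "(\<Sum>i=1..m-1. \<alpha> i * recip_coeff (\<lambda>i. s * \<beta> i) (m - 1 - i))
      = (\<Sum>i=1..m-1. \<alpha>' i * recip_coeff (\<lambda>i. s * \<beta>' i) (m - 1 - i))"
    by (rule sum.cong[OF refl])
  then show ?thesis
    unfolding rhs_coeff_def by simp
qed

lemma rhs_coeff_cmult: "rhs_coeff s (\<lambda>i. c * \<alpha> i) \<beta> m = c * rhs_coeff s \<alpha> \<beta> m"
  by (simp add: rhs_coeff_def sum_distrib_left mult_ac)

lemma rhs_coeff_bound:
  assumes s: "\<bar>s\<bar> \<le> 1" and c: "\<And>i. \<bar>\<alpha> i\<bar> \<le> c i" "\<And>i. \<bar>\<beta> i\<bar> \<le> c i"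
    and L: "\<And>n. (\<Sum>i=1..n. c i) \<le> L"
  shows "\<bar>rhs_coeff s \<alpha> \<beta> m\<bar> \<le> (1 + L) ^ m"
proof (cases m)
  case (Suc n)
  have L0: "0 \<le> L" using L[of 0] by simp
  have sc: "\<bar>s * \<beta> i\<bar> \<le> c i" for i
    by (rule abs_mult_le_of_abs_le_1[OF s c(2)])
  have "\<bar>rhs_coeff s \<alpha> \<beta> m\<bar> \<le> (\<Sum>i=1..n. \<bar>\<alpha> i * recip_coeff (\<lambda>i. s * \<beta> i) (n - i)\<bar>)"
  proof -
    have "\<bar>rhs_coeff s \<alpha> \<beta> m\<bar> = s\<^sup>2 * \<bar>\<Sum>i=1..n. \<alpha> i * recip_coeff (\<lambda>i. s * \<beta> i) (n - i)\<bar>"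
      using Suc by (simp add: rhs_coeff_def abs_mult)
    also have "\<dots> \<le> \<bar>\<Sum>i=1..n. \<alpha> i * recip_coeff (\<lambda>i. s * \<beta> i) (n - i)\<bar>"
      using s by (intro mult_left_le_one_le) (auto simp: abs_square_le_1)
    also have "\<dots> \<le> (\<Sum>i=1..n. \<bar>\<alpha> i * recip_coeff (\<lambda>i. s * \<beta> i) (n - i)\<bar>)"
      by (rule sum_abs)
    finally show ?thesis .
  qed
  also have "\<dots> \<le> L * (1 + L) ^ n"
  proof (rule sum_le_bound_mult[OF _ L])
    fix i assume "i \<in> {1..n}"
    then have "\<bar>recip_coeff (\<lambda>i. s * \<beta> i) (n - i)\<bar> \<le> (1 + L) ^ n"
      using recip_coeff_bound[OF sc L, of "n - i"] power_increasing[of "n - i" n "1 + L"] L0 by simp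
    then show "\<bar>\<alpha> i * recip_coeff (\<lambda>i. s * \<beta> i) (n - i)\<bar> \<le> c i * (1 + L) ^ n"
      unfolding abs_mult using c(1)[of i] by (intro mult_mono) auto
  qed (use L0 in simp)
  also have "\<dots> \<le> (1 + L) ^ m" using Suc L0 by simp
  finally show ?thesis .
qed simp

lemma rhs_coeff_power_eq:
  assumes "\<And>i. i \<notin> {1..N} \<Longrightarrow> \<alpha> i = 0"
  shows "rhs_coeff s \<alpha> \<beta> m * r ^ m = - s\<^sup>2 * (\<Sum>i=1..N. if i + 1 \<le> m
    then \<alpha> i * (r ^ (i + 1) * (recip_coeff (\<lambda>i. s * \<beta> i) (m - (i + 1)) * r ^ (m - (i + 1)))) else 0)"
proof -
  have pw: "\<alpha> i * recip_coeff (\<lambda>i. s * \<beta> i) (m - 1 - i) * r ^ m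
      = \<alpha> i * (r ^ (i + 1) * (recip_coeff (\<lambda>i. s * \<beta> i) (m - (i + 1)) * r ^ (m - (i + 1))))"
    if "i \<in> {1..m-1}" for i
  proof -
    have "(i + 1) + (m - (i + 1)) = m" using that by auto
    then have "r ^ m = r ^ (i + 1) * r ^ (m - (i + 1))" by (metis power_add)
    moreover have "m - 1 - i = m - (i + 1)" by simp
    ultimately show ?thesis by simp
  qed
  have "rhs_coeff s \<alpha> \<beta> m * r ^ m
      = - s\<^sup>2 * (\<Sum>i=1..m-1. \<alpha> i * recip_coeff (\<lambda>i. s * \<beta> i) (m - 1 - i) * r ^ m)"
    unfolding rhs_coeff_def by (simp only: mult.assoc sum_distrib_right)
  also have "\<dots> = - s\<^sup>2 * (\<Sum>i=1..N. if i \<le> m - 1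
      then \<alpha> i * (r ^ (i + 1) * (recip_coeff (\<lambda>i. s * \<beta> i) (m - (i + 1)) * r ^ (m - (i + 1)))) else 0)"
    by (simp only: sum.cong[OF refl pw] sum_restrict_support[OF assms])
  also have "(\<Sum>i=1..N. if i \<le> m - 1
      then \<alpha> i * (r ^ (i + 1) * (recip_coeff (\<lambda>i. s * \<beta> i) (m - (i + 1)) * r ^ (m - (i + 1)))) else 0)
    = (\<Sum>i=1..N. if i + 1 \<le> m
      then \<alpha> i * (r ^ (i + 1) * (recip_coeff (\<lambda>i. s * \<beta> i) (m - (i + 1)) * r ^ (m - (i + 1)))) else 0)"
    by (intro sum.cong) auto
  finally show ?thesis .
qed

text \<open>Multiply the series of \<open>1 / (1 - s B(r))\<close> by the polynomial \<open>- s\<^sup>2 r A(r)\<close>.\<close>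
lemma rhs_coeff_sums:
  assumes supp: "\<And>i. i \<notin> {1..N} \<Longrightarrow> \<alpha> i = 0" "\<And>i. i \<notin> {1..N} \<Longrightarrow> \<beta> i = 0"
    and s: "\<bar>s\<bar> \<le> 1" and c: "\<And>i. \<bar>\<alpha> i\<bar> \<le> c i" "\<And>i. \<bar>\<beta> i\<bar> \<le> c i"
    and L: "\<And>n. (\<Sum>i=1..n. c i) \<le> L" and r: "\<bar>r\<bar> * (1 + L) \<le> 1/2"
  shows "(\<lambda>m. rhs_coeff s \<alpha> \<beta> m * r ^ m)
    sums (- s\<^sup>2 * r * (\<Sum>i=1..N. \<alpha> i * r ^ i) / (1 - s * (\<Sum>i=1..N. \<beta> i * r ^ i)))"
proof -
  define e where "e n = recip_coeff (\<lambda>i. s * \<beta> i) n * r ^ n" for n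
  define S where "S = 1 / (1 - s * (\<Sum>i=1..N. \<beta> i * r ^ i))"
  have "e sums (1 / (1 - (\<Sum>i=1..N. s * \<beta> i * r ^ i)))"
    unfolding e_def
    by (rule recip_coeff_sums[where c = c and L = L]) (use supp(2) abs_mult_le_of_abs_le_1[OF s c(2)] L r in auto)
  then have e: "e sums S"
    by (simp add: S_def sum_distrib_left mult.assoc)
  have shifted: "(\<lambda>m. if i + 1 \<le> m then \<alpha> i * (r ^ (i + 1) * e (m - (i + 1))) else 0)
      sums (\<alpha> i * (r ^ (i + 1) * S))" if "i \<in> {1..N}" for i
    using sums_shift_right[OF sums_mult[OF sums_mult[OF e, of "r ^ (i + 1)"], of "\<alpha> i"], of "i + 1"] by simp
  have conv: "(\<lambda>m. - s\<^sup>2 * (\<Sum>i=1..N. if i + 1 \<le> m then \<alpha> i * (r ^ (i + 1) * e (m - (i + 1))) else 0))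
      sums (- s\<^sup>2 * (\<Sum>i=1..N. \<alpha> i * (r ^ (i + 1) * S)))"
    by (rule sums_mult[OF sums_sum[OF shifted]])
  have "rhs_coeff s \<alpha> \<beta> m * r ^ m
      = - s\<^sup>2 * (\<Sum>i=1..N. if i + 1 \<le> m then \<alpha> i * (r ^ (i + 1) * e (m - (i + 1))) else 0)" for m
    unfolding e_def by (rule rhs_coeff_power_eq[OF supp(1)])
  from iffD2[OF sums_cong[OF this] conv]
  have "(\<lambda>m. rhs_coeff s \<alpha> \<beta> m * r ^ m) sums (- s\<^sup>2 * (\<Sum>i=1..N. \<alpha> i * (r ^ (i + 1) * S)))" .
  moreover have "- s\<^sup>2 * (\<Sum>i=1..N. \<alpha> i * (r ^ (i + 1) * S))
      = - s\<^sup>2 * r * (\<Sum>i=1..N. \<alpha> i * r ^ i) / (1 - s * (\<Sum>i=1..N. \<beta> i * r ^ i))"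
    by (simp add: S_def sum_distrib_left sum_divide_distrib mult_ac)
  ultimately show ?thesis by simp
qed

lemma cont_coeff_poly_rhs_coeff:
  assumes "continuous_on UNIV s"
    and "\<And>i. cont_coeff_poly d (\<lambda>t lam. \<alpha> t lam i)" "\<And>i. cont_coeff_poly d (\<lambda>t lam. \<beta> t lam i)"
  shows "cont_coeff_poly d (\<lambda>t lam. rhs_coeff (s t) (\<alpha> t lam) (\<beta> t lam) m)"
  unfolding rhs_coeff_def using assms
  by (intro cont_coeff_poly_cmult cont_coeff_poly_sum cont_coeff_poly_mult cont_coeff_poly_recip_coeff
      continuous_intros) auto

text \<open>If \<open>r' = \<Sum>\<^sub>m F\<^sub>m(t) r\<^sup>m\<close> with \<open>F\<^sub>0 = F\<^sub>1 = 0\<close>, then \<open>\<Sum>\<^sub>k V\<^sub>k(t) r\<^sup>k\<close> is constant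
  along solutions exactly when \<open>V\<^sub>k' = - \<Sum>\<^sub>j\<^sub><\<^sub>k j V\<^sub>j F\<^sub>k\<^sub>-\<^sub>j\<^sub>+\<^sub>1\<close>; with \<open>V\<^sub>k(0) = [k = 1]\<close> this
  determines the coefficients of the inverse of the flow map \<open>r(0) \<mapsto> r(t)\<close>.\<close>
function inv_coeff :: "(nat \<Rightarrow> real \<Rightarrow> real) \<Rightarrow> nat \<Rightarrow> real \<Rightarrow> real" where
  "inv_coeff F k t = (if k = 0 then 0 else if k = 1 then 1 else
     antideriv (\<lambda>u. - (\<Sum>j=1..<k. real j * inv_coeff F j u * F (k - j + 1) u)) t)"
  by pat_completeness auto
termination by (relation "Wellfounded.measure (\<lambda>(F, k, t). k)") auto

declare inv_coeff.simps [simp del]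

definition inv_coeff_deriv :: "(nat \<Rightarrow> real \<Rightarrow> real) \<Rightarrow> nat \<Rightarrow> real \<Rightarrow> real" where
  "inv_coeff_deriv F k t = - (\<Sum>j=1..<k. real j * inv_coeff F j t * F (k - j + 1) t)"

lemma inv_coeff_0 [simp]: "inv_coeff F 0 t = 0"
  and inv_coeff_1 [simp]: "inv_coeff F (Suc 0) t = 1"
  by (simp_all add: inv_coeff.simps)

lemma inv_coeff_antideriv: "2 \<le> k \<Longrightarrow> inv_coeff F k t = antideriv (inv_coeff_deriv F k) t"
  by (subst inv_coeff.simps) (simp add: inv_coeff_deriv_def[abs_def])

lemma inv_coeff_at_0: "inv_coeff F k 0 = (if k = 1 then 1 else 0)"
proof -
  have "k = 0 \<or> k = 1" if "\<not> 2 \<le> k" using that by linarith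
  then show ?thesis by (cases "2 \<le> k") (auto simp: inv_coeff_antideriv)
qed

lemma inv_coeff_deriv_le_1: "k \<le> 1 \<Longrightarrow> inv_coeff_deriv F k t = 0"
  by (simp add: inv_coeff_deriv_def)

lemma inv_coeff_continuous:
  assumes "\<And>m. continuous_on UNIV (F m)"
  shows "continuous_on UNIV (inv_coeff F k)" "continuous_on UNIV (inv_coeff_deriv F k)"
proof -
  show cont: "continuous_on UNIV (inv_coeff F k)" for k
  proof (induction k rule: less_induct)
    case (less k)
    have "continuous_on UNIV (inv_coeff_deriv F k)"
      unfolding inv_coeff_deriv_def[abs_def] using less assms by (auto intro!: continuous_intros)
    moreover have "k = 0 \<or> k = 1" if "\<not> 2 \<le> k" using that by linarith
    ultimately show ?case
      by (cases "2 \<le> k") (auto simp: inv_coeff_antideriv antideriv_continuous)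
  qed
  show "continuous_on UNIV (inv_coeff_deriv F k)"
    unfolding inv_coeff_deriv_def[abs_def] using cont assms by (auto intro!: continuous_intros)
qed

lemma inv_coeff_has_real_derivative:
  assumes "\<And>m. continuous_on UNIV (F m)"
  shows "((\<lambda>t. inv_coeff F k t) has_real_derivative inv_coeff_deriv F k t) (at t)"
proof (cases "2 \<le> k")
  case True
  then show ?thesis
    using antideriv_has_real_derivative[OF inv_coeff_continuous(2)[OF assms]]
    by (simp add: inv_coeff_antideriv)
next
  case False
  then have "k = 0 \<or> k = 1" by linarith
  then show ?thesis by (auto simp: inv_coeff_deriv_le_1)
qed

lemma inv_coeff_partial_sum_has_derivative:
  assumes "\<And>m. continuous_on UNIV (F m)" and \<psi>: "(\<psi> has_real_derivative \<Phi>) (at u within S)"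
  shows "((\<lambda>u. \<Sum>k\<le>N. inv_coeff F k u * \<psi> u ^ k) has_real_derivative
    (\<Sum>k\<le>N. inv_coeff_deriv F k u * \<psi> u ^ k + inv_coeff F k u * (real k * \<psi> u ^ (k - 1) * \<Phi>)))
    (at u within S)"
proof (rule DERIV_sum)
  fix k
  have "((\<lambda>u. \<psi> u ^ k) has_real_derivative real k * \<Phi> * \<psi> u ^ (k - 1)) (at u within S)"
    by (rule DERIV_cong[OF DERIV_power[OF \<psi>]]) simp
  from DERIV_mult[OF has_field_derivative_at_within[OF
      inv_coeff_has_real_derivative[where F = F and k = k, OF assms(1)]] this]
  show "((\<lambda>u. inv_coeff F k u * \<psi> u ^ k) has_real_derivative
      inv_coeff_deriv F k u * \<psi> u ^ k + inv_coeff F k u * (real k * \<psi> u ^ (k - 1) * \<Phi>)) (at u within S)"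
    by (simp add: mult_ac)
qed

lemma inv_coeff_cong:
  assumes "\<And>m t. m \<le> k \<Longrightarrow> F m t = G m t"
  shows "inv_coeff F k t = inv_coeff G k t"
  using assms
proof (induction k arbitrary: t rule: less_induct)
  case (less k)
  have "inv_coeff_deriv F k = inv_coeff_deriv G k"
    unfolding inv_coeff_deriv_def using less by (intro ext arg_cong[where f = uminus] sum.cong) auto
  moreover have "k = 0 \<or> k = 1" if "\<not> 2 \<le> k" using that by linarith
  ultimately show ?case
    by (cases "2 \<le> k") (auto simp: inv_coeff_antideriv)
qed

lemma inv_coeff_eq_0:
  assumes "\<And>m t. F m t = 0" "2 \<le> k"
  shows "inv_coeff F k t = 0"
proof -
  have "inv_coeff_deriv F k = (\<lambda>_. 0)" by (rule ext) (simp add: inv_coeff_deriv_def assms)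
  then show ?thesis using assms(2) by (simp add: inv_coeff_antideriv antideriv_def)
qed

lemma inv_coeff_reparam:
  assumes g: "\<And>t. (g has_real_derivative g' t) (at t)" "g 0 = 0"
    and FG: "\<And>m t. F m t = g' t * G m (g t)"
    and cont: "\<And>m. continuous_on UNIV (F m)" "\<And>m. continuous_on UNIV (G m)"
  shows "inv_coeff F k t = inv_coeff G k (g t)"
proof (induction k arbitrary: t rule: less_induct)
  case (less k)
  show ?case
  proof (cases "2 \<le> k")
    case True
    have D: "inv_coeff_deriv F k u = inv_coeff_deriv G k (g u) * g' u" for u
    proof -
      have pw: "real j * inv_coeff F j u * F (k - j + 1) u
          = g' u * (real j * inv_coeff G j (g u) * G (k - j + 1) (g u))" if "j \<in> {1..<k}" for j
        using less[of j u] that FG[of "k - j + 1" u] by simp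
      have "(\<Sum>j=1..<k. real j * inv_coeff F j u * F (k - j + 1) u)
          = g' u * (\<Sum>j=1..<k. real j * inv_coeff G j (g u) * G (k - j + 1) (g u))"
        unfolding sum_distrib_left by (rule sum.cong[OF refl pw])
      then show ?thesis
        unfolding inv_coeff_deriv_def by simp
    qed
    have "((\<lambda>u. inv_coeff F k u - inv_coeff G k (g u)) has_real_derivative 0) (at u)" for u
      using DERIV_diff[OF inv_coeff_has_real_derivative[where F = F and k = k, OF cont(1)]
          DERIV_chain2[OF inv_coeff_has_real_derivative[where F = G and k = k, OF cont(2)] g(1)]]
      by (simp add: D)
    then have "inv_coeff F k t - inv_coeff G k (g t) = inv_coeff F k 0 - inv_coeff G k (g 0)"
      by (intro DERIV_isconst_all) auto
    then show ?thesis
      using True by (simp add: g(2) inv_coeff_at_0)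
  next
    case False
    then have "k = 0 \<or> k = 1" by linarith
    then show ?thesis by auto
  qed
qed

lemma cont_coeff_poly_inv_coeff:
  assumes "\<And>m. cont_coeff_poly d (\<lambda>t lam. F lam m t)"
  shows "cont_coeff_poly d (\<lambda>t lam. inv_coeff (F lam) k t)"
proof (induction k rule: less_induct)
  case (less k)
  consider "k = 0" | "k = 1" | "2 \<le> k" by linarith
  then show ?case
  proof cases
    case 1
    then show ?thesis using cont_coeff_poly_const[of "\<lambda>_. 0"] by simp
  next
    case 2
    then show ?thesis using cont_coeff_poly_const[of "\<lambda>_. 1"] by simp
  next
    case 3
    have "cont_coeff_poly d (\<lambda>t lam. inv_coeff_deriv (F lam) k t)"
      unfolding inv_coeff_deriv_def using less assms
      by (intro cont_coeff_poly_cmult[of "\<lambda>_. -1", simplified] cont_coeff_poly_sum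
          cont_coeff_poly_mult cont_coeff_poly_cmult) auto
    from cont_coeff_poly_antideriv[OF this] show ?thesis
      using 3 by (simp add: inv_coeff_antideriv)
  qed
qed

lemma inv_coeff_transport_identity:
  assumes "F 0 t = 0" "F (Suc 0) t = 0"
  shows   "(\<Sum>k\<le>N. inv_coeff_deriv F k t * x ^ k) +
   (\<Sum>k\<le>N. inv_coeff F k t * (real k * x ^ (k - 1) * (\<Sum>m\<le>N + 1 - k. F m t * x ^ m))) = 0"
proof (induction N)
  case 0
  show ?case by (simp add: inv_coeff_deriv_def)
next
  case (Suc N)
  define P where "P M = (\<Sum>m\<le>M. F m t * x ^ m)" for M
  have Psuc: "P (Suc N + 1 - k) = P (N + 1 - k) + F (N + 2 - k) t * x ^ (N + 2 - k)" if "k \<le> N" for k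
  proof -
    have "Suc N + 1 - k = Suc (N + 1 - k)" "N + 2 - k = Suc (N + 1 - k)" using that by auto
    then show ?thesis unfolding P_def by simp
  qed
  have P1: "P 1 = 0" by (simp add: P_def assms)
  have tm: "inv_coeff F k t * (real k * x ^ (k - 1) * (F (N + 2 - k) t * x ^ (N + 2 - k)))
      = real k * inv_coeff F k t * F (N + 2 - k) t * x ^ Suc N" if "k \<le> N" for k
  proof (cases k)
    case (Suc k')
    have "x ^ (k - 1) * x ^ (N + 2 - k) = x ^ Suc N"
      using that Suc by (simp add: power_add[symmetric])
    then show ?thesis by (simp add: algebra_simps)
  qed simp
  have sRR: "(\<Sum>k\<le>N. real k * inv_coeff F k t * F (N + 2 - k) t) = - inv_coeff_deriv F (Suc N) t"
  proof -
    have "(\<Sum>k\<le>N. real k * inv_coeff F k t * F (N + 2 - k) t) = (\<Sum>k\<in>{1..N}. real k * inv_coeff F k t * F (N + 2 - k) t)"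
      by (rule sum.mono_neutral_right) auto
    also have "\<dots> = (\<Sum>j\<in>{1..<Suc N}. real j * inv_coeff F j t * F (Suc N - j + 1) t)"
    proof (rule sum.cong)
      show "{1..N} = {1..<Suc N}" by auto
      fix j assume "j \<in> {1..<Suc N}"
      then have "N + 2 - j = Suc N - j + 1" by auto
      then show "real j * inv_coeff F j t * F (N + 2 - j) t = real j * inv_coeff F j t * F (Suc N - j + 1) t" by simp
    qed
    finally show ?thesis by (simp add: inv_coeff_deriv_def)
  qed
  have "(\<Sum>k\<le>Suc N. inv_coeff F k t * (real k * x ^ (k - 1) * P (Suc N + 1 - k)))
      = (\<Sum>k\<le>N. inv_coeff F k t * (real k * x ^ (k - 1) * P (Suc N + 1 - k)))"
    using P1 by simp
  also have "\<dots> = (\<Sum>k\<le>N. inv_coeff F k t * (real k * x ^ (k - 1) * P (N + 1 - k)))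
      + (\<Sum>k\<le>N. real k * inv_coeff F k t * F (N + 2 - k) t * x ^ Suc N)"
  proof -
    have "inv_coeff F k t * (real k * x ^ (k - 1) * P (Suc N + 1 - k)) =
        inv_coeff F k t * (real k * x ^ (k - 1) * P (N + 1 - k)) + real k * inv_coeff F k t * F (N + 2 - k) t * x ^ Suc N"
      if "k \<in> {..N}" for k
      using that Psuc[of k] tm[of k] by (simp add: algebra_simps)
    then show ?thesis by (simp add: sum.distrib)
  qed
  also have "(\<Sum>k\<le>N. real k * inv_coeff F k t * F (N + 2 - k) t * x ^ Suc N) = - inv_coeff_deriv F (Suc N) t * x ^ Suc N"
    using sRR by (simp add: sum_distrib_right[symmetric])
  finally have e: "(\<Sum>k\<le>Suc N. inv_coeff F k t * (real k * x ^ (k - 1) * P (Suc N + 1 - k)))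
     = (\<Sum>k\<le>N. inv_coeff F k t * (real k * x ^ (k - 1) * P (N + 1 - k))) - inv_coeff_deriv F (Suc N) t * x ^ Suc N" by simp
  have "(\<Sum>k\<le>Suc N. inv_coeff_deriv F k t * x ^ k) = (\<Sum>k\<le>N. inv_coeff_deriv F k t * x ^ k) + inv_coeff_deriv F (Suc N) t * x ^ Suc N" by simp
  then show ?case using Suc.IH e unfolding P_def by simp
qed


lemma abs_le_exp_of_deriv_nonneg:
  fixes g R :: "real \<Rightarrow> real"
  assumes dg: "\<And>t. (g has_real_derivative R t) (at t)" and g0: "g 0 = 0"
    and R: "\<And>t. 0 \<le> t \<Longrightarrow> \<bar>R t\<bar> \<le> C * exp (\<alpha> * t)" and \<alpha>: "0 < \<alpha>" and C: "0 \<le> C"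
    and t: "0 \<le> t"
  shows "\<bar>g t\<bar> \<le> C / \<alpha> * exp (\<alpha> * t)"
proof -
  have "C / \<alpha> * exp (\<alpha> * 0) - \<sigma> * g 0 \<le> C / \<alpha> * exp (\<alpha> * t) - \<sigma> * g t"
    if \<sigma>: "\<sigma> = 1 \<or> \<sigma> = -1" for \<sigma>
  proof (rule DERIV_nonneg_imp_nondecreasing[OF t])
    fix x assume x: "0 \<le> x" "x \<le> t"
    have "((\<lambda>x. exp (\<alpha> * x)) has_real_derivative exp (\<alpha> * x) * \<alpha>) (at x)"
      by (rule DERIV_chain2[OF DERIV_exp DERIV_cmult_Id])
    from DERIV_diff[OF DERIV_cmult[OF this] DERIV_cmult[OF dg]]
    have "((\<lambda>x. C / \<alpha> * exp (\<alpha> * x) - \<sigma> * g x) has_real_derivative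
        C / \<alpha> * (exp (\<alpha> * x) * \<alpha>) - \<sigma> * R x) (at x)" .
    moreover have "0 \<le> C / \<alpha> * (exp (\<alpha> * x) * \<alpha>) - \<sigma> * R x"
      using R[OF x(1)] \<alpha> \<sigma> by (auto simp: abs_le_iff)
    ultimately show "\<exists>y. ((\<lambda>x. C / \<alpha> * exp (\<alpha> * x) - \<sigma> * g x) has_real_derivative y) (at x) \<and> 0 \<le> y"
      by blast
  qed
  from this[of 1] this[of "-1"] have "\<bar>g t\<bar> \<le> C / \<alpha> * exp (\<alpha> * t) - C / \<alpha>"
    using g0 by auto
  also have "\<dots> \<le> C / \<alpha> * exp (\<alpha> * t)" using C \<alpha> by simp
  finally show ?thesis .
qed

lemma abs_le_exp_of_deriv:
  fixes g R :: "real \<Rightarrow> real"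
  assumes dg: "\<And>t. (g has_real_derivative R t) (at t)" and g0: "g 0 = 0"
    and R: "\<And>t. \<bar>R t\<bar> \<le> C * exp (\<alpha> * \<bar>t\<bar>)" and \<alpha>: "0 < \<alpha>" and C: "0 \<le> C"
  shows "\<bar>g t\<bar> \<le> C / \<alpha> * exp (\<alpha> * \<bar>t\<bar>)"
proof (cases "0 \<le> t")
  case True
  have "\<bar>R x\<bar> \<le> C * exp (\<alpha> * x)" if "0 \<le> x" for x
    using R[of x] that by simp
  from abs_le_exp_of_deriv_nonneg[OF dg g0 this \<alpha> C True] True show ?thesis by simp
next
  case False
  have "\<bar>(\<lambda>x. g (- x)) (- t)\<bar> \<le> C / \<alpha> * exp (\<alpha> * (- t))"
  proof (rule abs_le_exp_of_deriv_nonneg[where R = "\<lambda>x. - R (- x)", OF _ _ _ \<alpha> C])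
    show "((\<lambda>x. g (- x)) has_real_derivative - R (- x)) (at x)" for x
      using DERIV_mirror[where f = g and x = x and y = "R (- x)"] dg by simp
    show "\<bar>- R (- x)\<bar> \<le> C * exp (\<alpha> * x)" if "0 \<le> x" for x
      using R[of "- x"] that by simp
  qed (use g0 False in auto)
  then show ?thesis using False by simp
qed

lemma sum_pow2_le: "(\<Sum>j\<in>{1..<k}. (2::real) ^ j) \<le> 2 ^ k"
proof -
  have "(\<Sum>j\<in>{1..<k}. (2::real) ^ j) \<le> (\<Sum>j<k. 2 ^ j)"
    by (intro sum_mono2) auto
  also have "\<dots> = 2 ^ k - 1"
    by (induction k) auto
  finally show ?thesis by simp
qed

lemma abs_inv_coeff_deriv_le:
  assumes F: "\<And>m t. \<bar>F m t\<bar> \<le> B ^ m" and B: "1 \<le> B" and x: "1 \<le> x"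
    and V: "\<And>j. j < k \<Longrightarrow> \<bar>inv_coeff F j u\<bar> \<le> (2 * B * x) ^ j"
  shows "\<bar>inv_coeff_deriv F k u\<bar> \<le> real k * B * (2 * B) ^ k * x ^ k"
proof -
  have "\<bar>inv_coeff_deriv F k u\<bar> \<le> (\<Sum>j\<in>{1..<k}. \<bar>real j * inv_coeff F j u * F (k - j + 1) u\<bar>)"
    unfolding inv_coeff_deriv_def abs_minus_cancel by (rule sum_abs)
  also have "\<dots> \<le> (\<Sum>j\<in>{1..<k}. real k * x ^ k * B ^ (k + 1) * 2 ^ j)"
  proof (rule sum_mono)
    fix j assume j: "j \<in> {1..<k}"
    have "\<bar>real j * inv_coeff F j u * F (k - j + 1) u\<bar> \<le> real k * (2 ^ j * B ^ j * x ^ j) * B ^ (k - j + 1)"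
      unfolding abs_mult power_mult_distrib[symmetric]
      using j V[of j] F[of "k - j + 1" u] B by (intro mult_mono) auto
    also have "\<dots> \<le> real k * (2 ^ j * B ^ j * x ^ k) * B ^ (k - j + 1)"
      using x j B by (intro mult_right_mono mult_left_mono power_increasing) auto
    also have "\<dots> = real k * x ^ k * B ^ (j + (k - j + 1)) * 2 ^ j"
      by (simp add: power_add)
    finally show "\<bar>real j * inv_coeff F j u * F (k - j + 1) u\<bar> \<le> real k * x ^ k * B ^ (k + 1) * 2 ^ j"
      using j by simp
  qed
  also have "\<dots> = real k * x ^ k * B ^ (k + 1) * (\<Sum>j\<in>{1..<k}. 2 ^ j)"
    by (simp add: sum_distrib_left)
  also have "\<dots> \<le> real k * x ^ k * B ^ (k + 1) * 2 ^ k"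
    using B x by (intro mult_left_mono sum_pow2_le) auto
  also have "\<dots> = real k * B * (2 * B) ^ k * x ^ k"
    by (simp add: power_mult_distrib algebra_simps)
  finally show ?thesis .
qed

lemma inv_coeff_bound:
  assumes F: "\<And>m t. \<bar>F m t\<bar> \<le> B ^ m" and cont: "\<And>m. continuous_on UNIV (F m)" and B: "1 \<le> B"
  shows "\<bar>inv_coeff F k t\<bar> \<le> (2 * B * exp (B * \<bar>t\<bar>)) ^ k"
proof (induction k arbitrary: t rule: less_induct)
  case (less k)
  have xk: "exp (B * \<bar>t\<bar>) ^ k = exp (real k * B * \<bar>t\<bar>)" for t
    by (simp add: exp_of_nat_mult[symmetric] mult.assoc)
  consider "k = 0" | "k = 1" | "2 \<le> k" by linarith
  then show ?case
  proof cases
    case 2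
    have "1 * 1 \<le> B * exp (B * \<bar>t\<bar>)" using B by (intro mult_mono) auto
    then show ?thesis using 2 by simp
  next
    case 3
    define C where "C = real k * B * (2 * B) ^ k"
    have "\<bar>inv_coeff_deriv F k u\<bar> \<le> C * exp (real k * B * \<bar>u\<bar>)" for u
    proof -
      have "\<bar>inv_coeff F j u\<bar> \<le> (2 * B * exp (B * \<bar>u\<bar>)) ^ j" if "j < k" for j
        using less.IH[OF that] .
      from abs_inv_coeff_deriv_le[where k = k, OF F B _ this] B show ?thesis by (simp add: C_def xk)
    qed
    then have "\<bar>inv_coeff F k t\<bar> \<le> C / (real k * B) * exp (real k * B * \<bar>t\<bar>)"
      using 3 B by (intro abs_le_exp_of_deriv[OF inv_coeff_has_real_derivative[OF cont]])
        (auto simp: inv_coeff_at_0 C_def)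
    also have "\<dots> = (2 * B * exp (B * \<bar>t\<bar>)) ^ k"
      using 3 B by (simp add: C_def xk power_mult_distrib)
    finally show ?thesis .
  qed simp
qed

definition trunc :: "nat \<Rightarrow> (nat \<Rightarrow> real) \<Rightarrow> nat \<Rightarrow> real" where
  "trunc d lam i = (if i \<in> {1..d} then lam i else 0)"

definition odd_part :: "(nat \<Rightarrow> real) \<Rightarrow> nat \<Rightarrow> real" where
  "odd_part lam i = (if odd i then lam i else 0)"

definition par_norm :: "nat \<Rightarrow> (nat \<Rightarrow> real) \<Rightarrow> real" where
  "par_norm d lam = (\<Sum>i=1..d. \<bar>lam i\<bar>)"

lemma par_norm_nonneg: "0 \<le> par_norm d lam"
  by (simp add: par_norm_def sum_nonneg)

lemma sum_abs_trunc_le: "(\<Sum>i=1..n. \<bar>trunc d lam i\<bar>) \<le> par_norm d lam"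
proof -
  have "(\<Sum>i=1..n. \<bar>trunc d lam i\<bar>) = (\<Sum>i\<in>{1..n} \<inter> {1..d}. \<bar>lam i\<bar>)"
    by (intro sum.mono_neutral_cong_right) (auto simp: trunc_def)
  also have "\<dots> \<le> par_norm d lam"
    unfolding par_norm_def by (intro sum_mono2) auto
  finally show ?thesis .
qed

lemma abs_trunc_mult_cos_power_le: "\<bar>trunc d lam i * cos t ^ n\<bar> \<le> \<bar>trunc d lam i\<bar>"
  unfolding abs_mult power_abs by (intro mult_left_le power_le_one) (auto simp: abs_cos_le_one)

lemma trunc_odd_part: "trunc d (odd_part lam) i = (if odd i then trunc d lam i else 0)"
  by (simp add: trunc_def odd_part_def)

lemma trunc_zero: "trunc d (\<lambda>_. 0) = (\<lambda>_. 0)"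
  by (rule ext) (simp add: trunc_def)

lemma pL_trunc: "pL d lam x = (\<Sum>i=1..d. trunc d lam i * x ^ i)"
  unfolding pL_def by (intro sum.cong) (auto simp: trunc_def)

lemma cont_coeff_poly_trunc: "cont_coeff_poly d (\<lambda>t lam. trunc d lam i)"
proof (cases "i \<in> {1..d}")
  case True
  then show ?thesis
    using cont_coeff_poly_var[OF True] by (simp add: trunc_def)
next
  case False
  then have "trunc d lam i = 0" for lam
    unfolding trunc_def by (rule if_not_P)
  then show ?thesis
    using cont_coeff_poly_const[of "\<lambda>_. 0" d] by simp
qed

text \<open>Taylor coefficients in \<open>r\<close> of the right-hand side of the polar equation, whose
  factor \<open>p(r cos \<theta>)\<close> contributes \<open>\<lambda>\<^sub>i cos\<^sup>i \<theta> r\<^sup>i\<close>.\<close>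
definition polar_coeff :: "nat \<Rightarrow> (nat \<Rightarrow> real) \<Rightarrow> nat \<Rightarrow> real \<Rightarrow> real" where
  "polar_coeff d lam m t =
     rhs_coeff (sin t) (\<lambda>i. trunc d lam i * cos t ^ i) (\<lambda>i. trunc d lam i * cos t ^ (i + 1)) m"

lemma polar_coeff_bound: "\<bar>polar_coeff d lam m t\<bar> \<le> (1 + par_norm d lam) ^ m"
  unfolding polar_coeff_def
  by (rule rhs_coeff_bound[where c = "\<lambda>i. \<bar>trunc d lam i\<bar>", OF abs_sin_le_one
        abs_trunc_mult_cos_power_le abs_trunc_mult_cos_power_le sum_abs_trunc_le])

lemma polar_rhs_sums:
  assumes "\<bar>r\<bar> * (1 + par_norm d lam) \<le> 1/2"
  shows "(\<lambda>m. polar_coeff d lam m t * r ^ m) sums polar_rhs d lam t r"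
proof -
  have "(\<lambda>m. polar_coeff d lam m t * r ^ m) sums
      (- (sin t)\<^sup>2 * r * (\<Sum>i=1..d. trunc d lam i * cos t ^ i * r ^ i)
        / (1 - sin t * (\<Sum>i=1..d. trunc d lam i * cos t ^ (i + 1) * r ^ i)))"
    unfolding polar_coeff_def
    by (rule rhs_coeff_sums[where c = "\<lambda>i. \<bar>trunc d lam i\<bar>", OF _ _ abs_sin_le_one
          abs_trunc_mult_cos_power_le abs_trunc_mult_cos_power_le sum_abs_trunc_le assms])
      (auto simp: trunc_def)
  moreover have "(\<Sum>i=1..d. trunc d lam i * cos t ^ i * r ^ i) = pL d lam (r * cos t)"
    "(\<Sum>i=1..d. trunc d lam i * cos t ^ (i + 1) * r ^ i) = cos t * pL d lam (r * cos t)"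
    unfolding pL_trunc by (auto simp: sum_distrib_left power_mult_distrib mult_ac intro!: sum.cong)
  moreover have "a / (b - 1) = - (a / (1 - b))" for a b :: real
    by (metis divide_minus_right minus_diff_eq)
  ultimately show ?thesis
    by (simp add: polar_rhs_def polar_den_def mult_ac)
qed

lemma cont_coeff_poly_polar_coeff: "cont_coeff_poly d (\<lambda>t lam. polar_coeff d lam m t)"
  unfolding polar_coeff_def
  by (intro cont_coeff_poly_rhs_coeff cont_coeff_poly_mult[OF cont_coeff_poly_trunc]
      cont_coeff_poly_const continuous_intros)

lemma continuous_polar_coeff: "continuous_on UNIV (polar_coeff d lam m)"
  using cont_coeff_poly_continuous[OF cont_coeff_poly_polar_coeff] .

lemma inv_coeff_polar_coeff_cong:
  assumes "\<And>i. i < k \<Longrightarrow> trunc d lam i = trunc d lam' i"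
  shows "inv_coeff (polar_coeff d lam) k t = inv_coeff (polar_coeff d lam') k t"
  unfolding polar_coeff_def using assms by (intro inv_coeff_cong rhs_coeff_cong) auto

text \<open>For odd \<open>\<lambda>\<close> the polar coefficients are \<open>cos \<theta>\<close> times functions of \<open>sin \<theta>\<close>, because
  \<open>cos\<^sup>i \<theta>\<close> and \<open>cos\<^sup>i\<^sup>+\<^sup>1 \<theta>\<close> are then \<open>cos \<theta>\<close> times, respectively exactly, even powers of
  \<open>cos \<theta>\<close>.\<close>
definition sin_coeff :: "nat \<Rightarrow> (nat \<Rightarrow> real) \<Rightarrow> nat \<Rightarrow> real \<Rightarrow> real" where
  "sin_coeff d lam m s =
     rhs_coeff s (\<lambda>i. trunc d (odd_part lam) i * (1 - s\<^sup>2) ^ ((i - 1) div 2))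
       (\<lambda>i. trunc d (odd_part lam) i * (1 - s\<^sup>2) ^ ((i + 1) div 2)) m"

lemma polar_coeff_odd_part: "polar_coeff d (odd_part lam) m t = cos t * sin_coeff d lam m (sin t)"
proof -
  have even_power: "cos t ^ (2 * j) = (1 - (sin t)\<^sup>2) ^ j" for j
    by (simp add: power_mult cos_squared_eq)
  have "cos t ^ i = cos t * (1 - (sin t)\<^sup>2) ^ ((i - 1) div 2)"
    "cos t ^ (i + 1) = (1 - (sin t)\<^sup>2) ^ ((i + 1) div 2)" if "odd i" for i
  proof -
    from that obtain j where i: "i = 2 * j + 1" by (rule oddE)
    then show "cos t ^ i = cos t * (1 - (sin t)\<^sup>2) ^ ((i - 1) div 2)"
      using even_power[of j] by simp
    have "i + 1 = 2 * (j + 1)" using i by simp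
    then show "cos t ^ (i + 1) = (1 - (sin t)\<^sup>2) ^ ((i + 1) div 2)"
      using even_power[of "j + 1"] by simp
  qed
  then have "polar_coeff d (odd_part lam) m t = rhs_coeff (sin t)
      (\<lambda>i. cos t * (trunc d (odd_part lam) i * (1 - (sin t)\<^sup>2) ^ ((i - 1) div 2)))
      (\<lambda>i. trunc d (odd_part lam) i * (1 - (sin t)\<^sup>2) ^ ((i + 1) div 2)) m"
    unfolding polar_coeff_def by (intro rhs_coeff_cong) (auto simp: trunc_def odd_part_def)
  then show ?thesis
    by (simp add: rhs_coeff_cmult sin_coeff_def)
qed

lemma cont_coeff_poly_sin_coeff: "cont_coeff_poly d (\<lambda>s lam. sin_coeff d lam m s)"
proof -
  have "cont_coeff_poly d (\<lambda>t lam. trunc d (odd_part lam) i)" for i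
    using cont_coeff_poly_trunc[of d i] cont_coeff_poly_const[of "\<lambda>_. 0" d]
    by (cases "odd i") (simp_all add: trunc_odd_part)
  then show ?thesis
    unfolding sin_coeff_def
    by (intro cont_coeff_poly_rhs_coeff cont_coeff_poly_mult cont_coeff_poly_const continuous_intros)
qed

lemma continuous_sin_coeff: "continuous_on UNIV (sin_coeff d lam m)"
  using cont_coeff_poly_continuous[OF cont_coeff_poly_sin_coeff] .

lemma inv_coeff_polar_odd_part:
  "inv_coeff (polar_coeff d (odd_part lam)) k t = inv_coeff (sin_coeff d lam) k (sin t)"
  by (rule inv_coeff_reparam[OF DERIV_sin sin_zero polar_coeff_odd_part
        continuous_polar_coeff continuous_sin_coeff])

lemma inv_coeff_sin_coeff_cong:
  assumes "\<And>i. i < k \<Longrightarrow> trunc d (odd_part lam) i = trunc d (odd_part lam') i"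
  shows "inv_coeff (sin_coeff d lam) k s = inv_coeff (sin_coeff d lam') k s"
  unfolding sin_coeff_def using assms by (intro inv_coeff_cong rhs_coeff_cong) auto

lemma inv_coeff_sin_coeff_zero: "2 \<le> k \<Longrightarrow> inv_coeff (sin_coeff d (\<lambda>_. 0)) k s = 0"
proof (rule inv_coeff_eq_0)
  have "trunc d (odd_part (\<lambda>_. 0)) = (\<lambda>_. 0)"
    by (rule ext) (simp add: trunc_odd_part trunc_zero)
  then show "sin_coeff d (\<lambda>_. 0) m s = 0" for m s
    by (simp add: sin_coeff_def rhs_coeff_def)
qed

lemma abs_pL_le:
  assumes "\<bar>x\<bar> \<le> 1"
  shows "\<bar>pL d lam x\<bar> \<le> par_norm d lam * \<bar>x\<bar>"
proof -
  have "\<bar>pL d lam x\<bar> \<le> (\<Sum>i=1..d. \<bar>lam i * x ^ i\<bar>)"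
    unfolding pL_def by (rule sum_abs)
  also have "\<dots> \<le> (\<Sum>i=1..d. \<bar>lam i\<bar> * \<bar>x\<bar>)"
  proof (rule sum_mono)
    fix i assume "i \<in> {1..d}"
    then have "\<bar>x\<bar> ^ i \<le> \<bar>x\<bar> ^ 1" using assms by (intro power_decreasing) auto
    then show "\<bar>lam i * x ^ i\<bar> \<le> \<bar>lam i\<bar> * \<bar>x\<bar>"
      unfolding abs_mult power_abs by (intro mult_left_mono) auto
  qed
  finally show ?thesis by (simp add: par_norm_def sum_distrib_right)
qed

lemma abs_le_of_mult_le:
  fixes r N :: real
  assumes "\<bar>r\<bar> * (1 + N) \<le> c" "0 \<le> N"
  shows "\<bar>r\<bar> \<le> c"
proof -
  have "\<bar>r\<bar> * 1 \<le> \<bar>r\<bar> * (1 + N)" using assms(2) by (intro mult_left_mono) auto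
  then show ?thesis using assms(1) by simp
qed

lemma abs_pL_cos_le:
  assumes "\<bar>r\<bar> * (1 + par_norm d lam) \<le> 1/2"
  shows "\<bar>pL d lam (r * cos t)\<bar> \<le> par_norm d lam * \<bar>r\<bar>"
proof -
  have N: "0 \<le> par_norm d lam" by (rule par_norm_nonneg)
  have rc: "\<bar>r * cos t\<bar> \<le> \<bar>r\<bar>"
    unfolding abs_mult using abs_cos_le_one[of t] by (intro mult_left_le) auto
  moreover have "\<bar>r\<bar> \<le> 1/2" using abs_le_of_mult_le[OF assms N] .
  ultimately have "\<bar>pL d lam (r * cos t)\<bar> \<le> par_norm d lam * \<bar>r * cos t\<bar>"
    by (intro abs_pL_le) simp
  also have "\<dots> \<le> par_norm d lam * \<bar>r\<bar>" by (rule mult_left_mono[OF rc N])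
  finally show ?thesis .
qed

lemma abs_polar_den_ge:
  assumes "\<bar>r\<bar> * (1 + par_norm d lam) \<le> 1/2"
  shows "1/2 \<le> \<bar>polar_den d lam t r\<bar>"
proof -
  have "par_norm d lam * \<bar>r\<bar> \<le> \<bar>r\<bar> * (1 + par_norm d lam)" by (simp add: algebra_simps)
  then have p: "\<bar>pL d lam (r * cos t)\<bar> \<le> 1/2" using abs_pL_cos_le[OF assms, of t] assms by linarith
  have "\<bar>sin t\<bar> * \<bar>cos t\<bar> * \<bar>pL d lam (r * cos t)\<bar> \<le> 1 * 1 * (1/2)"
    using p abs_sin_le_one[of t] abs_cos_le_one[of t] by (intro mult_mono) auto
  then have "\<bar>sin t * cos t * pL d lam (r * cos t)\<bar> \<le> 1/2" by (simp add: abs_mult)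
  then show ?thesis unfolding polar_den_def by linarith
qed

lemma abs_polar_rhs_le:
  assumes r: "\<bar>r\<bar> * (1 + par_norm d lam) \<le> 1/2"
  shows "\<bar>polar_rhs d lam t r\<bar> \<le> 2 * (1 + par_norm d lam) * r\<^sup>2"
proof -
  have "\<bar>pL d lam (r * cos t)\<bar> \<le> (1 + par_norm d lam) * \<bar>r\<bar>"
    using abs_pL_cos_le[OF r, of t] by (simp add: algebra_simps)
  then have num: "\<bar>r * pL d lam (r * cos t) * (sin t)\<^sup>2\<bar> \<le> \<bar>r\<bar> * ((1 + par_norm d lam) * \<bar>r\<bar>) * 1"
    unfolding abs_mult using abs_square_le_1[of "sin t"] abs_sin_le_one[of t]
    by (intro mult_mono) (auto simp: par_norm_nonneg)
  have sq: "\<bar>r\<bar> * ((1 + par_norm d lam) * \<bar>r\<bar>) = (1 + par_norm d lam) * (r * r)"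
    by (simp add: abs_mult_self_eq mult.left_commute)
  have "\<bar>polar_rhs d lam t r\<bar> = \<bar>r * pL d lam (r * cos t) * (sin t)\<^sup>2\<bar> / \<bar>polar_den d lam t r\<bar>"
    by (simp add: polar_rhs_def abs_divide)
  also have "\<dots> \<le> \<bar>r\<bar> * ((1 + par_norm d lam) * \<bar>r\<bar>) * 1 / (1/2)"
    by (rule frac_le) (use num abs_polar_den_ge[OF r, of t] in auto)
  also have "\<dots> = 2 * (1 + par_norm d lam) * r\<^sup>2"
    unfolding sq by (simp add: power2_eq_square)
  finally show ?thesis .
qed

lemma abs_power_diff_le:
  fixes x y :: real
  assumes "\<bar>x\<bar> \<le> c" "\<bar>y\<bar> \<le> c"
  shows "\<bar>x ^ m - y ^ m\<bar> \<le> real m * c ^ (m - 1) * \<bar>x - y\<bar>"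
proof -
  have "\<bar>\<Sum>i<m. y ^ (m - Suc i) * x ^ i\<bar> \<le> (\<Sum>i<m. c ^ (m - 1))"
  proof (rule order_trans[OF sum_abs sum_mono])
    fix i assume "i \<in> {..<m}"
    then have "\<bar>y ^ (m - Suc i) * x ^ i\<bar> \<le> c ^ (m - Suc i) * c ^ i"
      unfolding abs_mult power_abs using assms by (intro mult_mono power_mono) auto
    also have "\<dots> = c ^ (m - 1)" using \<open>i \<in> {..<m}\<close> by (simp add: power_add[symmetric])
    finally show "\<bar>y ^ (m - Suc i) * x ^ i\<bar> \<le> c ^ (m - 1)" .
  qed
  then have "\<bar>x - y\<bar> * \<bar>\<Sum>i<m. y ^ (m - Suc i) * x ^ i\<bar> \<le> \<bar>x - y\<bar> * (real m * c ^ (m - 1))"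
    by (intro mult_left_mono) auto
  then show ?thesis
    by (simp add: power_diff_sumr2[of x m y] abs_mult mult_ac)
qed

lemma polar_rhs_lipschitz:
  assumes c: "(1 + par_norm d lam) * c \<le> 1/4" and r: "\<bar>r\<bar> \<le> c" and r': "\<bar>r'\<bar> \<le> c"
  shows "\<bar>polar_rhs d lam t r - polar_rhs d lam t r'\<bar> \<le> 8 * (1 + par_norm d lam) * \<bar>r - r'\<bar>"
proof -
  define B where "B = 1 + par_norm d lam"
  have B1: "1 \<le> B" using par_norm_nonneg by (simp add: B_def)
  have c0: "0 \<le> c" using r by linarith
  have cB: "c * B \<le> 1/4" using c by (simp add: B_def mult.commute)
  have "\<bar>x\<bar> * B \<le> 1/2" if "\<bar>x\<bar> \<le> c" for x
  proof -
    have "\<bar>x\<bar> * B \<le> c * B" using that B1 by (intro mult_right_mono) auto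
    then show ?thesis using cB by linarith
  qed
  then have s: "(\<lambda>m. polar_coeff d lam m t * r ^ m - polar_coeff d lam m t * r' ^ m)
      sums (polar_rhs d lam t r - polar_rhs d lam t r')"
    using r r' by (intro sums_diff polar_rhs_sums) (auto simp: B_def)
  have bnd: "\<bar>polar_coeff d lam m t * r ^ m - polar_coeff d lam m t * r' ^ m\<bar> \<le> 4 * B * \<bar>r - r'\<bar> * (1/2) ^ m"
    for m
  proof (cases m)
    case (Suc n)
    have "\<bar>polar_coeff d lam m t * r ^ m - polar_coeff d lam m t * r' ^ m\<bar>
        = \<bar>polar_coeff d lam m t\<bar> * \<bar>r ^ m - r' ^ m\<bar>"
      by (simp add: abs_mult right_diff_distrib[symmetric])
    also have "\<dots> \<le> B ^ m * (real m * c ^ n * \<bar>r - r'\<bar>)"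
      using polar_coeff_bound[of d lam m t] abs_power_diff_le[OF r r', of m] Suc
      by (intro mult_mono) (auto simp: B_def)
    also have "\<dots> = 4 * B * \<bar>r - r'\<bar> * (real m * (B * c) ^ n * (1/4))"
      using Suc by (simp add: power_mult_distrib)
    also have "real m * (B * c) ^ n * (1/4) \<le> real m * (1/4) ^ n * (1/4)"
      using c c0 B1 by (intro mult_right_mono mult_left_mono power_mono) (auto simp: B_def)
    also have "\<dots> = real m * (1/4) ^ m" using Suc by simp
    also have "\<dots> \<le> (1/2) ^ m"
    proof -
      have "real m \<le> 2 ^ m" using less_exp[of m] by (simp add: of_nat_le_iff[symmetric])
      then have "real m * (1/4::real) ^ m \<le> 2 ^ m * (1/4) ^ m" by (intro mult_right_mono) auto
      also have "(2::real) ^ m * (1/4) ^ m = (1/2) ^ m" by (simp add: power_mult_distrib[symmetric])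
      finally show ?thesis .
    qed
    finally show ?thesis using B1 by (simp add: mult_left_mono)
  qed (use B1 in simp)
  have "(\<lambda>m. 4 * B * \<bar>r - r'\<bar> * (1/2::real) ^ m) sums (8 * B * \<bar>r - r'\<bar>)"
    using sums_mult[OF geometric_sums[of "1/2::real"], of "4 * B * \<bar>r - r'\<bar>"] by (simp add: mult.assoc)
  from norm_sums_le[OF s this, unfolded real_norm_def, OF bnd] show ?thesis
    by (simp add: B_def)
qed

lemma continuous_on_polar_rhs:
  assumes "continuous_on S \<phi>" "\<And>t. t \<in> S \<Longrightarrow> polar_den d lam t (\<phi> t) \<noteq> 0"
  shows "continuous_on S (\<lambda>t. polar_rhs d lam t (\<phi> t))"
  unfolding polar_rhs_def using assms unfolding polar_den_def pL_def
  by (intro continuous_intros) auto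

lemma integral_power_from_0:
  assumes "0 \<le> t"
  shows "integral {0..t} (\<lambda>s. s ^ n) = t ^ Suc n / real (Suc n)"
proof -
  have "((\<lambda>s. s ^ n) has_integral (t ^ Suc n / real (Suc n) - 0 ^ Suc n / real (Suc n))) {0..t}"
  proof (rule fundamental_theorem_of_calculus[OF assms])
    fix x assume "x \<in> {0..t}"
    have "((\<lambda>s. s ^ Suc n / real (Suc n)) has_real_derivative x ^ n) (at x)"
      using DERIV_cdivide[OF DERIV_pow[of "Suc n" x], of "real (Suc n)"] by simp
    then show "((\<lambda>s. s ^ Suc n / real (Suc n)) has_vector_derivative x ^ n) (at x within {0..t})"
      by (simp add: has_real_derivative_iff_has_vector_derivative[symmetric] has_field_derivative_at_within)
  qed
  then show ?thesis by (simp add: integral_unique)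
qed

lemma abs_integral_le_integral:
  fixes f g :: "real \<Rightarrow> real"
  assumes "f integrable_on S" "g integrable_on S" "\<And>x. x \<in> S \<Longrightarrow> \<bar>f x\<bar> \<le> g x"
  shows "\<bar>integral S f\<bar> \<le> integral S g"
  using integral_norm_bound_integral[OF assms(1,2)] assms(3) by simp

text \<open>Local existence for \<open>r' = F(t, r)\<close>, \<open>r(0) = r\<^sub>0\<close> by Picard iteration, under a bound and a
  Lipschitz condition on the strip \<open>\<bar>r\<bar> \<le> \<delta>\<close>.\<close>
context
  fixes F :: "real \<Rightarrow> real \<Rightarrow> real" and \<theta> \<delta> M K r0 :: real
  assumes \<theta>: "0 \<le> \<theta>" and r0: "\<bar>r0\<bar> \<le> \<delta> / 2"
    and F_bound: "\<And>t r. \<bar>r\<bar> \<le> \<delta> \<Longrightarrow> \<bar>F t r\<bar> \<le> M" and \<theta>M: "\<theta> * M \<le> \<delta> / 2"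
    and F_lipschitz: "\<And>t r r'. \<bar>r\<bar> \<le> \<delta> \<Longrightarrow> \<bar>r'\<bar> \<le> \<delta> \<Longrightarrow> \<bar>F t r - F t r'\<bar> \<le> K * \<bar>r - r'\<bar>"
    and K: "0 < K"
    and F_cont: "\<And>p. continuous_on {0..\<theta>} p \<Longrightarrow> (\<And>s. s \<in> {0..\<theta>} \<Longrightarrow> \<bar>p s\<bar> \<le> \<delta>) \<Longrightarrow>
      continuous_on {0..\<theta>} (\<lambda>s. F s (p s))"
begin

primrec picard_iter :: "nat \<Rightarrow> real \<Rightarrow> real" where
  "picard_iter 0 = (\<lambda>t. r0)"
| "picard_iter (Suc n) = (\<lambda>t. r0 + integral {0..t} (\<lambda>s. F s (picard_iter n s)))"

lemma M_nonneg: "0 \<le> M"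
  using F_bound[of 0 0] r0 by linarith

lemma picard_integrable:
  assumes "continuous_on {0..\<theta>} p" "\<And>s. s \<in> {0..\<theta>} \<Longrightarrow> \<bar>p s\<bar> \<le> \<delta>" "t \<in> {0..\<theta>}"
  shows "(\<lambda>s. F s (p s)) integrable_on {0..t}"
  using assms by (intro integrable_continuous_interval continuous_on_subset[OF F_cont]) auto

lemma picard_iter_cont_bound:
  "continuous_on {0..\<theta>} (picard_iter n) \<and> (\<forall>t\<in>{0..\<theta>}. \<bar>picard_iter n t\<bar> \<le> \<delta>)"
proof (induction n)
  case 0
  then show ?case using r0 by (auto intro: continuous_intros)
next
  case (Suc n)
  then have c: "continuous_on {0..\<theta>} (picard_iter n)" and b: "\<And>t. t \<in> {0..\<theta>} \<Longrightarrow> \<bar>picard_iter n t\<bar> \<le> \<delta>"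
    by auto
  have "continuous (at x within {0..\<theta>}) (\<lambda>t. integral {0..t} (\<lambda>s. F s (picard_iter n s)))"
    if "x \<in> {0..\<theta>}" for x
    by (rule DERIV_continuous[OF integral_has_real_derivative[OF F_cont[OF c b] that]])
  then have "continuous_on {0..\<theta>} (\<lambda>t. integral {0..t} (\<lambda>s. F s (picard_iter n s)))"
    by (simp add: continuous_on_eq_continuous_within)
  moreover have "\<bar>r0 + integral {0..t} (\<lambda>s. F s (picard_iter n s))\<bar> \<le> \<delta>" if t: "t \<in> {0..\<theta>}" for t
  proof -
    have "\<bar>integral {0..t} (\<lambda>s. F s (picard_iter n s))\<bar> \<le> integral {0..t} (\<lambda>s. M)"
      by (rule abs_integral_le_integral[OF picard_integrable[OF c b t]]) (use t in \<open>auto intro!: F_bound b\<close>)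
    also have "\<dots> \<le> \<theta> * M" using t M_nonneg by (simp add: mult_right_mono)
    finally show ?thesis using r0 \<theta>M by linarith
  qed
  ultimately show ?case by (auto intro: continuous_intros)
qed

lemma picard_iter_step_bound:
  assumes "t \<in> {0..\<theta>}"
  shows "\<bar>picard_iter (Suc n) t - picard_iter n t\<bar> \<le> M * K ^ n * t ^ Suc n / fact (Suc n)"
  using assms
proof (induction n arbitrary: t)
  case 0
  have "\<bar>integral {0..t} (\<lambda>s. F s r0)\<bar> \<le> integral {0..t} (\<lambda>s. M)"
    by (rule abs_integral_le_integral) (use 0 r0 \<theta> in \<open>auto intro!: F_bound integrable_continuous_interval
        continuous_on_subset[OF F_cont[of "\<lambda>_. r0"]]\<close>)
  then show ?case using 0 by (simp add: mult.commute)
next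
  case (Suc n)
  note cb = picard_iter_cont_bound
  have t0: "0 \<le> t" using Suc.prems by simp
  have i: "(\<lambda>s. F s (picard_iter m s)) integrable_on {0..t}" for m
    using cb[of m] Suc.prems by (intro picard_integrable) auto
  have e: "picard_iter (Suc m) t = r0 + integral {0..t} (\<lambda>s. F s (picard_iter m s))" for m
    by (simp only: picard_iter.simps)
  have "\<bar>picard_iter (Suc (Suc n)) t - picard_iter (Suc n) t\<bar>
      = \<bar>integral {0..t} (\<lambda>s. F s (picard_iter (Suc n) s) - F s (picard_iter n s))\<bar>"
    by (simp del: picard_iter.simps add: e Henstock_Kurzweil_Integration.integral_diff[OF i i])
  also have "\<dots> \<le> integral {0..t} (\<lambda>s. K * (M * K ^ n / fact (Suc n)) * s ^ Suc n)"
  proof (rule abs_integral_le_integral)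
    show "(\<lambda>s. F s (picard_iter (Suc n) s) - F s (picard_iter n s)) integrable_on {0..t}"
      by (rule integrable_diff[OF i i])
    show "(\<lambda>s. K * (M * K ^ n / fact (Suc n)) * s ^ Suc n) integrable_on {0..t}"
      by (intro integrable_continuous_interval continuous_intros)
    fix s assume s: "s \<in> {0..t}"
    then have s\<theta>: "s \<in> {0..\<theta>}" using Suc.prems by auto
    have "\<bar>picard_iter (Suc n) s\<bar> \<le> \<delta>" "\<bar>picard_iter n s\<bar> \<le> \<delta>"
      using cb[of "Suc n"] cb[of n] s\<theta> by blast+
    then have "\<bar>F s (picard_iter (Suc n) s) - F s (picard_iter n s)\<bar>
        \<le> K * \<bar>picard_iter (Suc n) s - picard_iter n s\<bar>"
      by (rule F_lipschitz)
    also have "\<dots> \<le> K * (M * K ^ n * s ^ Suc n / fact (Suc n))"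
      using Suc.IH[OF s\<theta>] K by (intro mult_left_mono) auto
    finally show "\<bar>F s (picard_iter (Suc n) s) - F s (picard_iter n s)\<bar>
        \<le> K * (M * K ^ n / fact (Suc n)) * s ^ Suc n"
      by (simp add: field_simps)
  qed
  also have "\<dots> = K * (M * K ^ n / fact (Suc n)) * (t ^ Suc (Suc n) / real (Suc (Suc n)))"
    using Suc.prems by (simp only: integral_mult_right integral_power_from_0[OF t0])
  also have "\<dots> = M * K ^ Suc n * t ^ Suc (Suc n) / fact (Suc (Suc n))"
    by (simp add: field_simps)
  finally show ?case .
qed

definition picard_limit :: "real \<Rightarrow> real" where
  "picard_limit t = r0 + (\<Sum>j. picard_iter (Suc j) t - picard_iter j t)"

text \<open>The steps are dominated by the terms of an exponential series (Weierstrass M-test).\<close>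
lemma picard_iter_uniform_limit: "uniform_limit {0..\<theta>} picard_iter picard_limit sequentially"
proof -
  define b where "b n = M * K ^ n * \<theta> ^ Suc n / fact (Suc n)" for n
  have "summable (\<lambda>n. inverse (fact (Suc n)) * (K * \<theta>) ^ Suc n)"
    using summable_exp[of "K * \<theta>"] by (subst summable_Suc_iff)
  then have "summable (\<lambda>n. M / K * (inverse (fact (Suc n)) * (K * \<theta>) ^ Suc n))"
    by (rule summable_mult)
  moreover have "M / K * (inverse (fact (Suc n)) * (K * \<theta>) ^ Suc n) = b n" for n
    using K by (simp add: b_def power_mult_distrib field_simps)
  ultimately have "summable b" by simp
  moreover have "\<bar>picard_iter (Suc n) t - picard_iter n t\<bar> \<le> b n" if "t \<in> {0..\<theta>}" for n t
  proof -
    have "t ^ Suc n \<le> \<theta> ^ Suc n" using that by (intro power_mono) auto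
    then have "M * K ^ n * t ^ Suc n / fact (Suc n) \<le> b n"
      unfolding b_def using M_nonneg K by (intro divide_right_mono mult_left_mono) auto
    then show ?thesis using picard_iter_step_bound[OF that, of n] by linarith
  qed
  ultimately have "uniform_limit {0..\<theta>} (\<lambda>n t. \<Sum>j<n. picard_iter (Suc j) t - picard_iter j t)
      (\<lambda>t. \<Sum>j. picard_iter (Suc j) t - picard_iter j t) sequentially"
    by (intro Weierstrass_m_test) auto
  moreover have "(\<Sum>j<n. picard_iter (Suc j) t - picard_iter j t) = picard_iter n t - r0" for n t
    using sum_lessThan_telescope[of "\<lambda>j. picard_iter j t" n] by (simp del: picard_iter.simps(2))
  ultimately have "uniform_limit {0..\<theta>} (\<lambda>n t. picard_iter n t - r0)
      (\<lambda>t. \<Sum>j. picard_iter (Suc j) t - picard_iter j t) sequentially"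
    by (simp del: picard_iter.simps(2))
  from uniform_limit_add[OF uniform_limit_const[where c = "\<lambda>t. r0"] this]
  show ?thesis by (simp add: picard_limit_def[abs_def])
qed

lemma picard_limit_continuous: "continuous_on {0..\<theta>} picard_limit"
  using picard_iter_cont_bound by (intro uniform_limit_theorem[OF _ picard_iter_uniform_limit]) auto

lemma picard_limit_bound:
  assumes "t \<in> {0..\<theta>}"
  shows "\<bar>picard_limit t\<bar> \<le> \<delta>"
proof (rule tendsto_le[OF _ tendsto_const])
  show "(\<lambda>n. \<bar>picard_iter n t\<bar>) \<longlonglongrightarrow> \<bar>picard_limit t\<bar>"
    by (rule tendsto_rabs[OF tendsto_uniform_limitI[OF picard_iter_uniform_limit assms]])
  show "\<forall>\<^sub>F n in sequentially. \<bar>picard_iter n t\<bar> \<le> \<delta>"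
    using picard_iter_cont_bound assms by simp
qed simp

lemma picard_integrand_uniform_limit:
  "uniform_limit {0..\<theta>} (\<lambda>n s. F s (picard_iter n s)) (\<lambda>s. F s (picard_limit s)) sequentially"
proof (rule uniform_limitI)
  fix e :: real assume "0 < e"
  with K have "\<forall>\<^sub>F n in sequentially. \<forall>s\<in>{0..\<theta>}. dist (picard_iter n s) (picard_limit s) < e / K"
    by (intro uniform_limitD[OF picard_iter_uniform_limit]) simp
  then show "\<forall>\<^sub>F n in sequentially. \<forall>s\<in>{0..\<theta>}. dist (F s (picard_iter n s)) (F s (picard_limit s)) < e"
  proof eventually_elim
    case (elim n)
    show ?case
    proof
      fix s assume s: "s \<in> {0..\<theta>}"
      have "\<bar>F s (picard_iter n s) - F s (picard_limit s)\<bar> \<le> K * \<bar>picard_iter n s - picard_limit s\<bar>"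
        using picard_iter_cont_bound picard_limit_bound[OF s] s by (intro F_lipschitz) auto
      also have "\<dots> < e" using elim s K by (simp add: dist_real_def field_simps)
      finally show "dist (F s (picard_iter n s)) (F s (picard_limit s)) < e" by (simp add: dist_real_def)
    qed
  qed
qed

lemma picard_limit_integral_eq:
  assumes t: "t \<in> {0..\<theta>}"
  shows "picard_limit t = r0 + integral {0..t} (\<lambda>s. F s (picard_limit s))"
proof -
  have c: "continuous_on {0..t} (\<lambda>s. F s (picard_iter n s))" for n
    by (rule continuous_on_subset[OF F_cont]) (use picard_iter_cont_bound t in auto)
  have u: "uniform_limit {0..t} (\<lambda>n s. F s (picard_iter n s)) (\<lambda>s. F s (picard_limit s)) sequentially"
    by (rule uniform_limit_on_subset[OF picard_integrand_uniform_limit]) (use t in auto)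
  obtain I J where I: "\<And>n. ((\<lambda>s. F s (picard_iter n s)) has_integral I n) {0..t}"
    and J: "((\<lambda>s. F s (picard_limit s)) has_integral J) {0..t}" and IJ: "I \<longlonglongrightarrow> J"
    by (rule uniform_limit_integral[OF u c]) auto
  have "integral {0..t} (\<lambda>s. F s (picard_iter n s)) = I n" for n
    by (rule integral_unique[OF I])
  then have "(\<lambda>n. picard_iter (Suc n) t) \<longlonglongrightarrow> r0 + J"
    using tendsto_add[OF tendsto_const IJ, of r0] by simp
  moreover have "(\<lambda>n. picard_iter (Suc n) t) \<longlonglongrightarrow> picard_limit t"
    using LIMSEQ_Suc[OF tendsto_uniform_limitI[OF picard_iter_uniform_limit t]] .
  ultimately show ?thesis using J by (simp add: integral_unique LIMSEQ_unique)
qed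

lemma picard_solution:
  obtains \<phi> where "\<phi> 0 = r0" "\<And>t. t \<in> {0..\<theta>} \<Longrightarrow> \<bar>\<phi> t\<bar> \<le> \<delta>"
    "\<And>t. t \<in> {0..\<theta>} \<Longrightarrow> (\<phi> has_real_derivative F t (\<phi> t)) (at t within {0..\<theta>})"
proof
  show "picard_limit 0 = r0" using picard_limit_integral_eq[of 0] \<theta> by simp
  show "\<bar>picard_limit t\<bar> \<le> \<delta>" if "t \<in> {0..\<theta>}" for t using picard_limit_bound[OF that] .
  fix t assume t: "t \<in> {0..\<theta>}"
  have "((\<lambda>u. r0 + integral {0..u} (\<lambda>s. F s (picard_limit s))) has_real_derivative F t (picard_limit t))
      (at t within {0..\<theta>})"
    using DERIV_add[OF DERIV_const integral_has_real_derivative[OF F_cont[OF picard_limit_continuous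
          picard_limit_bound] t]] by simp
  then show "(picard_limit has_real_derivative F t (picard_limit t)) (at t within {0..\<theta>})"
    by (rule has_field_derivative_transform_within[of _ _ _ _ 1]) (use t picard_limit_integral_eq in auto)
qed
end

lemma polar_sol_exists_nonneg:
  assumes \<theta>: "0 \<le> \<theta>"
  obtains \<epsilon> where "0 < \<epsilon>" "\<And>r0. \<bar>r0\<bar> < \<epsilon> \<Longrightarrow> \<exists>\<phi>. is_polar_sol d lam r0 \<phi> {0..\<theta>}"
proof -
  define B where "B = 1 + par_norm d lam"
  have B1: "1 \<le> B" using par_norm_nonneg by (simp add: B_def)
  define \<delta> where "\<delta> = 1 / (4 * B * (\<theta> + 1))"
  have \<delta>0: "0 < \<delta>" using B1 \<theta> by (simp add: \<delta>_def)
  have B\<delta>: "B * \<delta> = 1 / (4 * (\<theta> + 1))" using B1 \<theta> by (simp add: \<delta>_def)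
  have B\<delta>4: "B * \<delta> \<le> 1/4" unfolding B\<delta> using \<theta> by (intro divide_left_mono) auto
  have small: "\<bar>r\<bar> * B \<le> 1/2" if "\<bar>r\<bar> \<le> \<delta>" for r
  proof -
    have "\<bar>r\<bar> * B \<le> \<delta> * B" using that B1 by (intro mult_right_mono) auto
    then show ?thesis using B\<delta>4 by (simp add: mult.commute)
  qed
  show ?thesis
  proof
    show "0 < \<delta> / 2" using \<delta>0 by simp
    fix r0 assume r0: "\<bar>r0\<bar> < \<delta> / 2"
    obtain \<phi> where \<phi>: "\<phi> 0 = r0" "\<And>t. t \<in> {0..\<theta>} \<Longrightarrow> \<bar>\<phi> t\<bar> \<le> \<delta>"
      "\<And>t. t \<in> {0..\<theta>} \<Longrightarrow> (\<phi> has_real_derivative polar_rhs d lam t (\<phi> t)) (at t within {0..\<theta>})"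
    proof (rule picard_solution[where F = "polar_rhs d lam" and \<delta> = \<delta> and M = "2 * B * \<delta>\<^sup>2" and K = "8 * B"])
      show "\<bar>polar_rhs d lam t r\<bar> \<le> 2 * B * \<delta>\<^sup>2" if "\<bar>r\<bar> \<le> \<delta>" for t r
      proof -
        have "\<bar>polar_rhs d lam t r\<bar> \<le> 2 * B * r\<^sup>2"
          using abs_polar_rhs_le[of r d lam t] small[OF that] by (simp add: B_def)
        also have "r\<^sup>2 \<le> \<delta>\<^sup>2" using power_mono[OF that abs_ge_zero, of 2] by simp
        finally show ?thesis using B1 by simp
      qed
      have "\<theta> * (2 * B * \<delta>\<^sup>2) = \<delta> * (2 * \<theta> * (B * \<delta>))" by (simp add: power2_eq_square mult_ac)
      also have "\<dots> \<le> \<delta> * (1/2)" using \<theta> \<delta>0 by (intro mult_left_mono) (auto simp: B\<delta> field_simps)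
      finally show "\<theta> * (2 * B * \<delta>\<^sup>2) \<le> \<delta> / 2" by simp
      show "\<bar>polar_rhs d lam t r - polar_rhs d lam t r'\<bar> \<le> 8 * B * \<bar>r - r'\<bar>"
        if "\<bar>r\<bar> \<le> \<delta>" "\<bar>r'\<bar> \<le> \<delta>" for t r r'
        using polar_rhs_lipschitz[OF _ that] B\<delta>4 by (simp add: B_def)
      show "continuous_on {0..\<theta>} (\<lambda>s. polar_rhs d lam s (p s))"
        if "continuous_on {0..\<theta>} p" "\<And>s. s \<in> {0..\<theta>} \<Longrightarrow> \<bar>p s\<bar> \<le> \<delta>" for p
      proof (rule continuous_on_polar_rhs[OF that(1)])
        fix s assume "s \<in> {0..\<theta>}"
        from abs_polar_den_ge[where t = s, OF small[OF that(2)[OF this], unfolded B_def]]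
        show "polar_den d lam s (p s) \<noteq> 0" by auto
      qed
    qed (use \<theta> r0 B1 in auto)
    have "polar_den d lam t (\<phi> t) \<noteq> 0" if "t \<in> {0..\<theta>}" for t
      using abs_polar_den_ge[where t = t, OF small[OF \<phi>(2)[OF that], unfolded B_def]] by auto
    then show "\<exists>\<phi>. is_polar_sol d lam r0 \<phi> {0..\<theta>}"
      unfolding is_polar_sol_def using \<phi> \<theta> by auto
  qed
qed

lemma polar_rhs_uminus: "polar_rhs d (\<lambda>i. - lam i) (- t) r = - polar_rhs d lam t r"
  and polar_den_uminus: "polar_den d (\<lambda>i. - lam i) (- t) r = polar_den d lam t r"
  by (simp_all add: polar_rhs_def polar_den_def pL_def sum_negf)

text \<open>Reversing time and \<open>\<lambda>\<close> together maps solutions to solutions.\<close>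
lemma polar_sol_exists:
  obtains \<epsilon> where "0 < \<epsilon>" "\<And>r0. \<bar>r0\<bar> < \<epsilon> \<Longrightarrow> \<exists>\<phi> I. is_polar_sol d lam r0 \<phi> I \<and> \<theta> \<in> I"
proof (cases "0 \<le> \<theta>")
  case True
  then show ?thesis
    using polar_sol_exists_nonneg[OF True, of d lam] that by (metis atLeastAtMost_iff order_refl)
next
  case False
  obtain \<epsilon> where "0 < \<epsilon>"
    and \<epsilon>: "\<And>r0. \<bar>r0\<bar> < \<epsilon> \<Longrightarrow> \<exists>\<phi>. is_polar_sol d (\<lambda>i. - lam i) r0 \<phi> {0..-\<theta>}"
    using polar_sol_exists_nonneg[of "- \<theta>" d "\<lambda>i. - lam i"] False by auto
  show ?thesis
  proof (rule that[OF \<open>0 < \<epsilon>\<close>])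
    fix r0 assume "\<bar>r0\<bar> < \<epsilon>"
    then obtain \<phi> where p: "is_polar_sol d (\<lambda>i. - lam i) r0 \<phi> {0..-\<theta>}" using \<epsilon> by blast
    have "is_polar_sol d lam r0 (\<lambda>t. \<phi> (- t)) {\<theta>..0}"
      unfolding is_polar_sol_def
    proof (intro conjI ballI)
      show "(\<lambda>t. \<phi> (- t)) 0 = r0" using p by (simp add: is_polar_sol_def)
      fix t assume t: "t \<in> {\<theta>..0}"
      then have "- t \<in> {0..-\<theta>}" by simp
      then have "polar_den d (\<lambda>i. - lam i) (- t) (\<phi> (- t)) \<noteq> 0"
        and d: "(\<phi> has_real_derivative polar_rhs d (\<lambda>i. - lam i) (- t) (\<phi> (- t))) (at (- t) within {0..-\<theta>})"
        using p unfolding is_polar_sol_def by blast+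
      then show "polar_den d lam t (\<phi> (- t)) \<noteq> 0" by (simp add: polar_den_uminus)
      have "(\<phi> has_real_derivative polar_rhs d (\<lambda>i. - lam i) (- t) (\<phi> (- t))) (at (- t) within uminus ` {\<theta>..0})"
        using d by simp
      from DERIV_image_chain[OF this DERIV_minus[OF DERIV_ident]]
      show "((\<lambda>t. \<phi> (- t)) has_real_derivative polar_rhs d lam t (\<phi> (- t))) (at t within {\<theta>..0})"
        by (simp add: polar_rhs_uminus o_def)
    qed (use False in auto)
    then show "\<exists>\<phi> I. is_polar_sol d lam r0 \<phi> I \<and> \<theta> \<in> I"
      using False by (intro exI[of _ "\<lambda>t. \<phi> (- t)"] exI[of _ "{\<theta>..0}"]) auto
  qed
qed

lemma abs_sums_le_geometric:
  fixes f :: "nat \<Rightarrow> real"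
  assumes "f sums s" "\<And>j. \<bar>f j\<bar> \<le> q ^ (j + m)" "0 \<le> q" "q \<le> 1/2"
  shows "\<bar>s\<bar> \<le> 2 * q ^ m"
proof -
  have "(\<lambda>j. q ^ (j + m)) sums (q ^ m * (1 / (1 - q)))"
    using sums_mult[OF geometric_sums[of q], of "q ^ m"] assms(3,4) by (simp add: power_add mult_ac)
  from norm_sums_le[OF assms(1) this, unfolded real_norm_def, OF assms(2)]
  have "\<bar>s\<bar> \<le> q ^ m * (1 / (1 - q))" .
  also have "\<dots> \<le> q ^ m * 2" using assms(3,4) by (intro mult_left_mono) (auto simp: field_simps)
  finally show ?thesis by simp
qed

lemma polar_rhs_tail_bound:
  assumes x: "\<bar>x\<bar> * (1 + par_norm d lam) \<le> 1/4"
  shows "\<bar>polar_rhs d lam t x - (\<Sum>m\<le>M. polar_coeff d lam m t * x ^ m)\<bar>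
    \<le> 2 * ((1 + par_norm d lam) * \<bar>x\<bar>) ^ Suc M"
proof -
  define q where "q = (1 + par_norm d lam) * \<bar>x\<bar>"
  have q: "0 \<le> q" "q \<le> 1/2" using x par_norm_nonneg[of d lam] by (auto simp: q_def mult.commute)
  have "(\<lambda>m. polar_coeff d lam m t * x ^ m) sums polar_rhs d lam t x"
    using x by (intro polar_rhs_sums) auto
  then have "(\<lambda>j. polar_coeff d lam (j + Suc M) t * x ^ (j + Suc M))
      sums (polar_rhs d lam t x - (\<Sum>m<Suc M. polar_coeff d lam m t * x ^ m))"
    by (rule sums_split_initial_segment)
  moreover have "\<bar>polar_coeff d lam (j + Suc M) t * x ^ (j + Suc M)\<bar> \<le> q ^ (j + Suc M)" for j
    unfolding abs_mult power_abs q_def power_mult_distrib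
    by (intro mult_right_mono polar_coeff_bound) auto
  ultimately have "\<bar>polar_rhs d lam t x - (\<Sum>m<Suc M. polar_coeff d lam m t * x ^ m)\<bar> \<le> 2 * q ^ Suc M"
    by (rule abs_sums_le_geometric[OF _ _ q])
  then show ?thesis by (simp add: q_def lessThan_Suc_atMost)
qed

definition inv_growth :: "nat \<Rightarrow> (nat \<Rightarrow> real) \<Rightarrow> real \<Rightarrow> real" where
  "inv_growth d lam T = 2 * (1 + par_norm d lam) * exp ((1 + par_norm d lam) * T)"

lemma inv_growth_ge:
  assumes "0 \<le> T"
  shows "1 + par_norm d lam \<le> inv_growth d lam T" "1 \<le> inv_growth d lam T"
proof -
  have N: "0 \<le> par_norm d lam" by (rule par_norm_nonneg)
  have "1 \<le> exp ((1 + par_norm d lam) * T)" using assms N by simp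
  then have "(1 + par_norm d lam) * 1 \<le> (1 + par_norm d lam) * exp ((1 + par_norm d lam) * T)"
    using N by (intro mult_left_mono) auto
  then have "1 + par_norm d lam \<le> (1 + par_norm d lam) * exp ((1 + par_norm d lam) * T)" by simp
  moreover have "0 \<le> (1 + par_norm d lam) * exp ((1 + par_norm d lam) * T)" using N by simp
  ultimately have "1 + par_norm d lam \<le> 2 * ((1 + par_norm d lam) * exp ((1 + par_norm d lam) * T))"
    by linarith
  then show "1 + par_norm d lam \<le> inv_growth d lam T" by (simp only: inv_growth_def mult.assoc)
  then show "1 \<le> inv_growth d lam T" using N by linarith
qed

lemma inv_coeff_polar_bound:
  assumes "\<bar>t\<bar> \<le> T"
  shows "\<bar>inv_coeff (polar_coeff d lam) k t\<bar> \<le> inv_growth d lam T ^ k"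
proof -
  define B where "B = 1 + par_norm d lam"
  have B1: "1 \<le> B" using par_norm_nonneg by (simp add: B_def)
  have "\<bar>inv_coeff (polar_coeff d lam) k t\<bar> \<le> (2 * B * exp (B * \<bar>t\<bar>)) ^ k"
    using polar_coeff_bound continuous_polar_coeff B1 unfolding B_def by (rule inv_coeff_bound)
  also have "\<dots> \<le> inv_growth d lam T ^ k"
    unfolding inv_growth_def B_def[symmetric] using assms B1 by (intro power_mono mult_left_mono) auto
  finally show ?thesis .
qed

lemma inv_coeff_transport_remainder:
  assumes "F 0 t = 0" "F (Suc 0) t = 0"
  shows "(\<Sum>k\<le>N. inv_coeff_deriv F k t * x ^ k + inv_coeff F k t * (real k * x ^ (k - 1) * y))
    = (\<Sum>k\<le>N. inv_coeff F k t * (real k * x ^ (k - 1) * (y - (\<Sum>m\<le>N + 1 - k. F m t * x ^ m))))"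
  using inv_coeff_transport_identity[where F = F and t = t and N = N and x = x, OF assms]
  by (simp add: sum.distrib right_diff_distrib sum_subtractf algebra_simps)

lemma polar_first_integral_term_bound:
  assumes x: "\<bar>x\<bar> \<le> \<delta>" and a\<delta>: "a * \<delta> \<le> 1/4" and aB: "1 + par_norm d lam \<le> a"
    and V: "\<bar>inv_coeff (polar_coeff d lam) k u\<bar> \<le> a ^ k" and k: "k \<le> N"
  shows "\<bar>inv_coeff (polar_coeff d lam) k u * (real k * x ^ (k - 1) *
      (polar_rhs d lam u x - (\<Sum>m\<le>N + 1 - k. polar_coeff d lam m u * x ^ m)))\<bar>
    \<le> 2 * real N * a * (1/4) ^ (N + 1)"
proof (cases k)
  case 0
  then show ?thesis using aB par_norm_nonneg[of d lam] by simp
next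
  case (Suc k')
  have N: "0 \<le> par_norm d lam" by (rule par_norm_nonneg)
  have \<delta>0: "0 \<le> \<delta>" using x by linarith
  have xa: "\<bar>x\<bar> * (1 + par_norm d lam) \<le> \<delta> * a" using x aB N \<delta>0 by (intro mult_mono) auto
  then have "\<bar>polar_rhs d lam u x - (\<Sum>m\<le>N + 1 - k. polar_coeff d lam m u * x ^ m)\<bar>
      \<le> 2 * ((1 + par_norm d lam) * \<bar>x\<bar>) ^ Suc (N + 1 - k)"
    using a\<delta> by (intro polar_rhs_tail_bound) (simp add: mult.commute)
  also have "Suc (N + 1 - k) = N + 2 - k" using k by auto
  also have "((1 + par_norm d lam) * \<bar>x\<bar>) ^ (N + 2 - k) \<le> (a * \<delta>) ^ (N + 2 - k)"
    using xa N by (intro power_mono) (auto simp: mult.commute)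
  finally have tail: "\<bar>polar_rhs d lam u x - (\<Sum>m\<le>N + 1 - k. polar_coeff d lam m u * x ^ m)\<bar>
      \<le> 2 * (a * \<delta>) ^ (N + 2 - k)" by simp
  have "\<bar>inv_coeff (polar_coeff d lam) k u * (real k * x ^ (k - 1) *
      (polar_rhs d lam u x - (\<Sum>m\<le>N + 1 - k. polar_coeff d lam m u * x ^ m)))\<bar>
      \<le> a ^ k * (real N * \<delta> ^ (k - 1) * (2 * (a * \<delta>) ^ (N + 2 - k)))"
    unfolding abs_mult power_abs abs_of_nat
    using V k x tail \<delta>0 by (intro mult_mono power_mono) auto
  also have "\<dots> = 2 * real N * a * (a * \<delta>) ^ (N + 1)"
  proof -
    have "(k - 1) + (N + 2 - k) = N + 1" "a ^ k = a * a ^ (k - 1)" using Suc k by auto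
    then show ?thesis by (simp add: power_mult_distrib power_add[symmetric] algebra_simps)
  qed
  also have "\<dots> \<le> 2 * real N * a * (1/4) ^ (N + 1)"
    using a\<delta> aB \<delta>0 N by (intro mult_left_mono power_mono) auto
  finally show ?thesis .
qed

lemma polar_first_integral_deriv_bound:
  assumes x: "\<bar>x\<bar> \<le> \<delta>" and a\<delta>: "a * \<delta> \<le> 1/4" and aB: "1 + par_norm d lam \<le> a"
    and V: "\<And>k. \<bar>inv_coeff (polar_coeff d lam) k u\<bar> \<le> a ^ k"
  shows "\<bar>\<Sum>k\<le>N. inv_coeff_deriv (polar_coeff d lam) k u * x ^ k
      + inv_coeff (polar_coeff d lam) k u * (real k * x ^ (k - 1) * polar_rhs d lam u x)\<bar>
    \<le> 2 * a * (real N + 1)\<^sup>2 * (1/4) ^ (N + 1)"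
proof -
  have a0: "0 \<le> a" using aB par_norm_nonneg[of d lam] by linarith
  have "polar_coeff d lam 0 u = 0" "polar_coeff d lam (Suc 0) u = 0"
    by (simp_all add: polar_coeff_def)
  from inv_coeff_transport_remainder[where F = "polar_coeff d lam" and t = u, OF this]
  have "\<bar>\<Sum>k\<le>N. inv_coeff_deriv (polar_coeff d lam) k u * x ^ k
      + inv_coeff (polar_coeff d lam) k u * (real k * x ^ (k - 1) * polar_rhs d lam u x)\<bar>
      \<le> (\<Sum>k\<le>N. \<bar>inv_coeff (polar_coeff d lam) k u * (real k * x ^ (k - 1) *
        (polar_rhs d lam u x - (\<Sum>m\<le>N + 1 - k. polar_coeff d lam m u * x ^ m)))\<bar>)"
    by (simp only:) (rule sum_abs)
  also have "\<dots> \<le> (\<Sum>k\<le>N. 2 * real N * a * (1/4) ^ (N + 1))"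
    by (intro sum_mono polar_first_integral_term_bound[OF x a\<delta> aB V]) simp
  also have "\<dots> = (real N + 1) * real N * (2 * a * (1/4) ^ (N + 1))" by (simp add: algebra_simps)
  also have "\<dots> \<le> (real N + 1)\<^sup>2 * (2 * a * (1/4) ^ (N + 1))"
    using a0 by (intro mult_right_mono) (auto simp: power2_eq_square)
  finally show ?thesis by (simp add: algebra_simps)
qed

lemma abs_le_of_closed_segment: "u \<in> closed_segment 0 \<theta> \<Longrightarrow> \<bar>u\<bar> \<le> \<bar>(\<theta>::real)\<bar>"
  by (auto simp: closed_segment_eq_real_ivl split: if_splits)

text \<open>\<open>\<Sum>\<^sub>k V\<^sub>k(t) r(t)\<^sup>k\<close> is constant along a solution that stays small: its partial sums have
  derivatives that tend to zero uniformly on the segment from \<open>0\<close> to \<open>\<theta>\<close>.\<close>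
lemma polar_first_integral:
  assumes sol: "is_polar_sol d lam r0 \<psi> I" and \<theta>I: "\<theta> \<in> I" and T: "\<bar>\<theta>\<bar> \<le> T"
    and a\<delta>: "inv_growth d lam T * \<delta> \<le> 1/4"
    and small: "\<And>u. u \<in> closed_segment 0 \<theta> \<Longrightarrow> \<bar>\<psi> u\<bar> \<le> \<delta>"
  shows "(\<lambda>k. inv_coeff (polar_coeff d lam) k \<theta> * \<psi> \<theta> ^ k) sums r0"
proof -
  define a where "a = inv_growth d lam T"
  define V where "V = inv_coeff (polar_coeff d lam)"
  define V' where "V' = inv_coeff_deriv (polar_coeff d lam)"
  define S where "S = closed_segment 0 \<theta>"
  have aB: "1 + par_norm d lam \<le> a" using inv_growth_ge T by (simp add: a_def)
  have I: "is_interval I" "0 \<in> I" "\<psi> 0 = r0"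
    and \<psi>': "\<And>u. u \<in> I \<Longrightarrow> (\<psi> has_real_derivative polar_rhs d lam u (\<psi> u)) (at u within I)"
    using sol by (auto simp: is_polar_sol_def)
  have SI: "S \<subseteq> I" unfolding S_def by (rule closed_segment_subset[OF I(2) \<theta>I is_interval_convex[OF I(1)]])
  define D where "D N u = (\<Sum>k\<le>N. V k u * \<psi> u ^ k)" for N u
  define err where "err N = 2 * a * (real N + 1)\<^sup>2 * (1/4::real) ^ (N + 1)" for N
  define DD where "DD N u =
    (\<Sum>k\<le>N. V' k u * \<psi> u ^ k + V k u * (real k * \<psi> u ^ (k - 1) * polar_rhs d lam u (\<psi> u)))" for N u
  have D': "(D N has_real_derivative DD N u) (at u within S)" if "u \<in> S" for N u
    unfolding D_def DD_def V_def V'_def using that SI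
    by (intro inv_coeff_partial_sum_has_derivative continuous_polar_coeff DERIV_subset[OF \<psi>']) auto
  have bnd: "\<bar>D N \<theta> - D N 0\<bar> \<le> err N * \<bar>\<theta> - 0\<bar>" for N
  proof -
    have "norm (D N \<theta> - D N 0) \<le> err N * norm (\<theta> - 0)"
    proof (rule field_differentiable_bound[where f = "D N" and f' = "DD N" and S = S])
      fix u assume u: "u \<in> S"
      show "(D N has_field_derivative DD N u) (at u within S)" using D'[OF u] .
      have "\<bar>V k u\<bar> \<le> a ^ k" for k
        using inv_coeff_polar_bound[of u T] abs_le_of_closed_segment[of u \<theta>] u T
        by (simp add: V_def a_def S_def)
      then show "norm (DD N u) \<le> err N"
        unfolding DD_def V_def V'_def err_def real_norm_def using u small a\<delta> aB
        by (intro polar_first_integral_deriv_bound) (auto simp: a_def S_def)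
    qed (auto simp: S_def)
    then show ?thesis by simp
  qed
  have D0: "D N 0 = r0" if "1 \<le> N" for N
  proof -
    have "D N 0 = (\<Sum>k\<le>N. if k = 1 then r0 else 0)"
      unfolding D_def V_def by (intro sum.cong) (auto simp: inv_coeff_at_0 I(3))
    then show ?thesis using that by simp
  qed
  have "\<forall>\<^sub>F N in sequentially. norm (D N \<theta> - r0) \<le> err N * \<bar>\<theta>\<bar>"
    using eventually_ge_at_top[of 1] by eventually_elim (use bnd D0 in auto)
  moreover have "(\<lambda>N. err N * \<bar>\<theta>\<bar>) \<longlonglongrightarrow> 0"
    unfolding err_def by real_asymp
  ultimately have "(\<lambda>N. D N \<theta> - r0) \<longlonglongrightarrow> 0" by (rule Lim_null_comparison)
  then show ?thesis
    unfolding sums_def_le D_def V_def by (simp add: LIM_zero_cancel)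
qed

lemma polar_sol_bootstrap:
  assumes sol: "is_polar_sol d lam r0 \<psi> I" and tI: "t \<in> I" and T: "\<bar>t\<bar> \<le> T"
    and a\<delta>: "inv_growth d lam T ^ 2 * \<delta> \<le> 1/4"
    and small: "\<And>u. u \<in> closed_segment 0 t \<Longrightarrow> \<bar>\<psi> u\<bar> \<le> \<delta>"
  shows "\<bar>\<psi> t\<bar> \<le> 2 * \<bar>r0\<bar>"
proof -
  define a where "a = inv_growth d lam T"
  define x where "x = \<psi> t"
  have a1: "1 \<le> a" using inv_growth_ge(2) T by (simp add: a_def)
  have \<delta>0: "0 \<le> \<delta>" using small[of 0] by auto
  have x\<delta>: "\<bar>x\<bar> \<le> \<delta>" using small[of t] by (simp add: x_def)
  have a2x: "a\<^sup>2 * \<bar>x\<bar> \<le> 1/4" using mult_left_mono[OF x\<delta>, of "a\<^sup>2"] a\<delta> by (simp add: a_def)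
  have "a * \<delta> \<le> a\<^sup>2 * \<delta>" using a1 \<delta>0 by (intro mult_right_mono) (auto simp: power2_eq_square)
  then have "(\<lambda>k. inv_coeff (polar_coeff d lam) k t * x ^ k) sums r0"
    unfolding x_def using a\<delta> by (intro polar_first_integral[OF sol tI T _ small]) (simp add: a_def)
  from sums_split_initial_segment[OF this, of 2]
  have "(\<lambda>j. inv_coeff (polar_coeff d lam) (j + 2) t * x ^ (j + 2)) sums (r0 - x)"
    by (simp add: numeral_2_eq_2)
  moreover have "\<bar>inv_coeff (polar_coeff d lam) (j + 2) t * x ^ (j + 2)\<bar> \<le> (a * \<bar>x\<bar>) ^ (j + 2)" for j
    unfolding abs_mult power_abs power_mult_distrib a_def
    by (intro mult_right_mono inv_coeff_polar_bound T) simp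
  moreover have "a * \<bar>x\<bar> \<le> a\<^sup>2 * \<bar>x\<bar>" using a1 by (intro mult_right_mono) (auto simp: power2_eq_square)
  then have "0 \<le> a * \<bar>x\<bar>" "a * \<bar>x\<bar> \<le> 1/2" using a1 a2x by auto
  ultimately have "\<bar>r0 - x\<bar> \<le> 2 * (a * \<bar>x\<bar>) ^ 2" by (rule abs_sums_le_geometric)
  also have "\<dots> = 2 * (a\<^sup>2 * \<bar>x\<bar>) * \<bar>x\<bar>" by (simp add: power2_eq_square)
  also have "\<dots> \<le> 2 * (1/4) * \<bar>x\<bar>" using a2x by (intro mult_right_mono) auto
  finally show ?thesis unfolding x_def by linarith
qed

lemma abs_less_of_closed_segment:
  "u \<in> closed_segment 0 t \<Longrightarrow> u \<noteq> t \<Longrightarrow> \<bar>u\<bar> < \<bar>(t::real)\<bar>"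
  by (auto simp: closed_segment_eq_real_ivl split: if_splits)

lemma closed_segment_abs_le_of_open_segment:
  fixes f :: "real \<Rightarrow> real"
  assumes cont: "continuous_on (closed_segment 0 t) f" and "t \<noteq> 0"
    and le: "\<And>v. v \<in> open_segment 0 t \<Longrightarrow> \<bar>f v\<bar> \<le> \<delta>" and u: "u \<in> closed_segment 0 t"
  shows "\<bar>f u\<bar> \<le> \<delta>"
proof -
  have "closed {u \<in> closed_segment 0 t. \<bar>f u\<bar> \<le> \<delta>}"
    by (intro continuous_on_closed_Collect_le continuous_intros cont) auto
  moreover have "open_segment 0 t \<subseteq> {u \<in> closed_segment 0 t. \<bar>f u\<bar> \<le> \<delta>}"
    using le by (auto simp: open_segment_def)
  ultimately have "closure (open_segment 0 t) \<subseteq> {u \<in> closed_segment 0 t. \<bar>f u\<bar> \<le> \<delta>}"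
    by (rule closure_minimal[rotated])
  then show ?thesis using u \<open>t \<noteq> 0\<close> by auto
qed

text \<open>Continuous induction along a segment: a point of \<open>\<bar>f\<bar> \<ge> \<delta>\<close> closest to \<open>0\<close> would
  contradict \<open>step\<close>.\<close>
lemma closed_segment_abs_less_induct:
  fixes f :: "real \<Rightarrow> real"
  assumes cont: "continuous_on (closed_segment 0 \<theta>) f" and f0: "\<bar>f 0\<bar> < \<delta>"
    and step: "\<And>t. t \<in> closed_segment 0 \<theta> \<Longrightarrow> (\<And>u. u \<in> closed_segment 0 t \<Longrightarrow> \<bar>f u\<bar> \<le> \<delta>) \<Longrightarrow>
      \<bar>f t\<bar> < \<delta>"
    and u: "u \<in> closed_segment 0 \<theta>"
  shows "\<bar>f u\<bar> < \<delta>"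
proof -
  define X where "X = {t \<in> closed_segment 0 \<theta>. \<delta> \<le> \<bar>f t\<bar>}"
  have sub: "closed_segment 0 t \<subseteq> closed_segment 0 \<theta>" if "t \<in> closed_segment 0 \<theta>" for t
    using that by (intro closed_segment_subset) auto
  have "X = {}"
  proof (rule ccontr)
    assume "X \<noteq> {}"
    moreover have "closed X" unfolding X_def
      by (rule continuous_on_closed_Collect_le) (auto intro: continuous_intros cont)
    from compact_Int_closed[OF compact_segment[of 0 \<theta>] this] have "compact X"
      by (simp add: X_def Int_absorb1)
    moreover have "continuous_on X (\<lambda>x. \<bar>x\<bar>)" by (intro continuous_intros)
    ultimately obtain t where t: "t \<in> X" and min: "\<And>y. y \<in> X \<Longrightarrow> \<bar>t\<bar> \<le> \<bar>y\<bar>"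
      using continuous_attains_inf[of X "\<lambda>x. \<bar>x\<bar>"] by blast
    then have tS: "t \<in> closed_segment 0 \<theta>" and ft: "\<delta> \<le> \<bar>f t\<bar>" by (auto simp: X_def)
    have "\<bar>f v\<bar> \<le> \<delta>" if "v \<in> open_segment 0 t" for v
    proof -
      have "v \<notin> X" using that min abs_less_of_closed_segment[of v t] by (force simp: open_segment_def)
      then show ?thesis using that sub[OF tS] by (auto simp: X_def open_segment_def)
    qed
    moreover have "t \<noteq> 0" using ft f0 by auto
    ultimately have "\<bar>f v\<bar> \<le> \<delta>" if "v \<in> closed_segment 0 t" for v
      using closed_segment_abs_le_of_open_segment[OF continuous_on_subset[OF cont sub[OF tS]]] that by blast
    with step[OF tS] ft show False by fastforce
  qed
  then show ?thesis using u by (fastforce simp: X_def)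
qed

lemma polar_sol_small:
  assumes sol: "is_polar_sol d lam r0 \<psi> I" and \<theta>I: "\<theta> \<in> I" and T: "\<bar>\<theta>\<bar> \<le> T"
    and a\<delta>: "inv_growth d lam T ^ 2 * \<delta> \<le> 1/4" and r0: "\<bar>r0\<bar> < \<delta> / 2"
    and u: "u \<in> closed_segment 0 \<theta>"
  shows "\<bar>\<psi> u\<bar> \<le> 2 * \<bar>r0\<bar>"
proof -
  have I: "is_interval I" "0 \<in> I" "\<psi> 0 = r0"
    and \<psi>': "\<And>u. u \<in> I \<Longrightarrow> (\<psi> has_real_derivative polar_rhs d lam u (\<psi> u)) (at u within I)"
    using sol by (auto simp: is_polar_sol_def)
  have seg: "closed_segment 0 t \<subseteq> closed_segment 0 \<theta>" if "t \<in> closed_segment 0 \<theta>" for t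
    using that by (intro closed_segment_subset) auto
  have SI: "closed_segment 0 \<theta> \<subseteq> I"
    by (rule closed_segment_subset[OF I(2) \<theta>I is_interval_convex[OF I(1)]])
  have bootstrap: "\<bar>\<psi> t\<bar> \<le> 2 * \<bar>r0\<bar>"
    if t: "t \<in> closed_segment 0 \<theta>" and small: "\<And>u. u \<in> closed_segment 0 t \<Longrightarrow> \<bar>\<psi> u\<bar> \<le> \<delta>" for t
  proof (rule polar_sol_bootstrap[OF sol _ _ a\<delta> small])
    show "t \<in> I" using t SI by auto
    show "\<bar>t\<bar> \<le> T" using abs_le_of_closed_segment[OF t] T by linarith
  qed
  have "continuous_on I \<psi>"
    using \<psi>' by (auto simp: continuous_on_eq_continuous_within intro: DERIV_continuous)
  then have cont: "continuous_on (closed_segment 0 \<theta>) \<psi>" using SI by (rule continuous_on_subset)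
  have less: "\<bar>\<psi> v\<bar> < \<delta>" if "v \<in> closed_segment 0 \<theta>" for v
  proof (rule closed_segment_abs_less_induct[OF cont _ _ that])
    show "\<bar>\<psi> 0\<bar> < \<delta>" using r0 I(3) by linarith
    fix t assume "t \<in> closed_segment 0 \<theta>" "\<And>u. u \<in> closed_segment 0 t \<Longrightarrow> \<bar>\<psi> u\<bar> \<le> \<delta>"
    from bootstrap[OF this] show "\<bar>\<psi> t\<bar> < \<delta>" using r0 by linarith
  qed
  show ?thesis
  proof (rule bootstrap[OF u])
    fix v assume "v \<in> closed_segment 0 u"
    with seg[OF u] have "v \<in> closed_segment 0 \<theta>" by blast
    from less[OF this] show "\<bar>\<psi> v\<bar> \<le> \<delta>" by simp
  qed
qed

lemma powser_coeffs_eq_0: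
  fixes a :: "nat \<Rightarrow> real"
  assumes s: "\<And>n. (\<lambda>k. a k * x n ^ k) sums 0" and x0: "x \<longlonglongrightarrow> 0" and nz: "\<And>n. x n \<noteq> 0"
  shows "a k = 0"
proof (induction k rule: less_induct)
  case (less k)
  have sk: "(\<lambda>j. a (j + k) * x n ^ j) sums 0" for n
  proof -
    have "(\<lambda>j. a (j + k) * x n ^ (j + k)) sums 0"
      using sums_zero_iff_shift[of k "\<lambda>j. a j * x n ^ j" 0] s[of n] less.IH by simp
    then have "(\<lambda>j. inverse (x n ^ k) * (a (j + k) * x n ^ (j + k))) sums (inverse (x n ^ k) * 0)"
      by (rule sums_mult)
    moreover have "inverse (x n ^ k) * (a (j + k) * x n ^ (j + k)) = a (j + k) * x n ^ j" for j
      using nz[of n] by (simp add: power_add field_simps)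
    ultimately show ?thesis by simp
  qed
  define g where "g y = (\<Sum>j. a (j + k) * y ^ j)" for y :: real
  have c: "isCont g 0"
    unfolding g_def by (rule isCont_powser[OF sums_summable[OF sk[of 0]]]) (use nz in simp)
  have "(\<lambda>n. g (x n)) \<longlonglongrightarrow> g 0" by (rule isCont_tendsto_compose[OF c x0])
  moreover have "g (x n) = 0" for n unfolding g_def using sums_unique[OF sk[of n]] by simp
  moreover have "g 0 = a k" unfolding g_def by simp
  ultimately have "(\<lambda>n. 0) \<longlonglongrightarrow> a k" by simp
  then show ?case using LIMSEQ_unique[OF tendsto_const] by metis
qed

lemma polar_inv_series:
  obtains \<epsilon> where "0 < \<epsilon>"
    "\<And>r0 \<psi> I. \<bar>r0\<bar> < \<epsilon> \<Longrightarrow> is_polar_sol d lam r0 \<psi> I \<Longrightarrow> \<theta> \<in> I \<Longrightarrow>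
      (\<lambda>k. inv_coeff (polar_coeff d lam) k \<theta> * \<psi> \<theta> ^ k) sums r0 \<and> \<bar>\<psi> \<theta>\<bar> \<le> 2 * \<bar>r0\<bar>"
proof
  define a where "a = inv_growth d lam \<bar>\<theta>\<bar>"
  define \<delta> where "\<delta> = 1 / (4 * a\<^sup>2)"
  have a1: "1 \<le> a" using inv_growth_ge(2) by (simp add: a_def)
  have a2\<delta>: "a\<^sup>2 * \<delta> = 1/4" using a1 by (simp add: \<delta>_def)
  moreover have "a * \<delta> \<le> a\<^sup>2 * \<delta>"
    using a1 by (intro mult_right_mono) (auto simp: \<delta>_def power2_eq_square)
  ultimately have a\<delta>: "a * \<delta> \<le> 1/4" by linarith
  show "0 < \<delta> / 2" using a1 by (simp add: \<delta>_def)
  fix r0 \<psi> I assume r0: "\<bar>r0\<bar> < \<delta> / 2" and sol: "is_polar_sol d lam r0 \<psi> I" and \<theta>I: "\<theta> \<in> I"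
  have small: "\<bar>\<psi> u\<bar> \<le> 2 * \<bar>r0\<bar>" if "u \<in> closed_segment 0 \<theta>" for u
    using a2\<delta> r0 that by (intro polar_sol_small[OF sol \<theta>I order_refl]) (simp_all add: a_def)
  have "(\<lambda>k. inv_coeff (polar_coeff d lam) k \<theta> * \<psi> \<theta> ^ k) sums r0"
    using a\<delta> small r0 by (intro polar_first_integral[OF sol \<theta>I order_refl]) (force simp: a_def)+
  then show "(\<lambda>k. inv_coeff (polar_coeff d lam) k \<theta> * \<psi> \<theta> ^ k) sums r0 \<and> \<bar>\<psi> \<theta>\<bar> \<le> 2 * \<bar>r0\<bar>"
    using small[of \<theta>] by simp
qed

lemma inv_expansion_inv_coeff: "inv_expansion d lam \<theta> (\<lambda>k. inv_coeff (polar_coeff d lam) k \<theta>)"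
proof -
  obtain \<epsilon>1 where "0 < \<epsilon>1" and ex: "\<And>r0. \<bar>r0\<bar> < \<epsilon>1 \<Longrightarrow> \<exists>\<phi> I. is_polar_sol d lam r0 \<phi> I \<and> \<theta> \<in> I"
    by (rule polar_sol_exists[where d = d and lam = lam and \<theta> = \<theta>]) blast
  obtain \<epsilon>2 where "0 < \<epsilon>2" and ser: "\<And>r0 \<psi> I. \<bar>r0\<bar> < \<epsilon>2 \<Longrightarrow> is_polar_sol d lam r0 \<psi> I \<Longrightarrow> \<theta> \<in> I \<Longrightarrow>
      (\<lambda>k. inv_coeff (polar_coeff d lam) k \<theta> * \<psi> \<theta> ^ k) sums r0 \<and> \<bar>\<psi> \<theta>\<bar> \<le> 2 * \<bar>r0\<bar>"
    by (rule polar_inv_series[where d = d and lam = lam and \<theta> = \<theta>]) blast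
  show ?thesis
    unfolding inv_expansion_def
  proof (intro exI[of _ "min \<epsilon>1 \<epsilon>2"] conjI allI impI)
    show "0 < min \<epsilon>1 \<epsilon>2" using \<open>0 < \<epsilon>1\<close> \<open>0 < \<epsilon>2\<close> by simp
    fix r0 :: real assume r0: "\<bar>r0\<bar> < min \<epsilon>1 \<epsilon>2"
    then obtain \<phi> I where sol: "is_polar_sol d lam r0 \<phi> I" "\<theta> \<in> I" using ex[of r0] by auto
    with ser[of r0 \<phi> I] r0 show "\<exists>\<phi> I. is_polar_sol d lam r0 \<phi> I \<and> \<theta> \<in> I \<and>
        (\<lambda>k. inv_coeff (polar_coeff d lam) k \<theta> * \<phi> \<theta> ^ k) sums r0"
      by auto
  qed
qed

text \<open>Two expansions agree along a sequence of orbits with \<open>r\<^sub>0 \<rightarrow> 0\<close>, on which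
  \<open>r(\<theta>) \<rightarrow> 0\<close> and \<open>r(\<theta>) \<noteq> 0\<close>; hence their coefficients coincide.\<close>
lemma inv_expansion_unique:
  assumes "inv_expansion d lam \<theta> v"
  shows "v = (\<lambda>k. inv_coeff (polar_coeff d lam) k \<theta>)"
proof -
  define V where "V k = inv_coeff (polar_coeff d lam) k \<theta>" for k
  obtain \<epsilon>v where "0 < \<epsilon>v" and ev: "\<And>r0. \<bar>r0\<bar> < \<epsilon>v \<Longrightarrow>
      \<exists>\<phi> I. is_polar_sol d lam r0 \<phi> I \<and> \<theta> \<in> I \<and> (\<lambda>k. v k * \<phi> \<theta> ^ k) sums r0"
    using assms unfolding inv_expansion_def by blast
  obtain \<epsilon> where "0 < \<epsilon>" and ser: "\<And>r0 \<psi> I. \<bar>r0\<bar> < \<epsilon> \<Longrightarrow> is_polar_sol d lam r0 \<psi> I \<Longrightarrow> \<theta> \<in> I \<Longrightarrow>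
      (\<lambda>k. V k * \<psi> \<theta> ^ k) sums r0 \<and> \<bar>\<psi> \<theta>\<bar> \<le> 2 * \<bar>r0\<bar>"
    unfolding V_def by (rule polar_inv_series[where d = d and lam = lam and \<theta> = \<theta>]) blast
  define c where "c = min \<epsilon>v \<epsilon>"
  define \<rho> where "\<rho> n = c / (real n + 2)" for n
  have c: "0 < c" using \<open>0 < \<epsilon>v\<close> \<open>0 < \<epsilon>\<close> by (simp add: c_def)
  have "\<rho> n < c" for n
  proof -
    have "c * 1 < c * (real n + 2)" using c by (intro mult_strict_left_mono) auto
    then show ?thesis using c by (simp add: \<rho>_def divide_less_eq)
  qed
  then have \<rho>: "0 < \<rho> n" "\<rho> n < \<epsilon>v" "\<rho> n < \<epsilon>" for n
    using c by (auto simp: \<rho>_def c_def)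
  have "\<exists>x. (\<lambda>k. v k * x ^ k) sums \<rho> n \<and> (\<lambda>k. V k * x ^ k) sums \<rho> n \<and> \<bar>x\<bar> \<le> 2 * \<rho> n" for n
  proof -
    obtain \<phi> I where "is_polar_sol d lam (\<rho> n) \<phi> I" "\<theta> \<in> I" "(\<lambda>k. v k * \<phi> \<theta> ^ k) sums \<rho> n"
      using ev[of "\<rho> n"] \<rho>[of n] by auto
    with ser[of "\<rho> n"] \<rho>[of n] show ?thesis by (intro exI[of _ "\<phi> \<theta>"]) auto
  qed
  then obtain x where x: "\<And>n. (\<lambda>k. v k * x n ^ k) sums \<rho> n" "\<And>n. (\<lambda>k. V k * x n ^ k) sums \<rho> n"
    "\<And>n. \<bar>x n\<bar> \<le> 2 * \<rho> n" by metis
  have "x n \<noteq> 0" for n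
  proof
    assume "x n = 0"
    then have "(\<lambda>k. V k * x n ^ k) sums V 0" using powser_sums_zero[of V] by simp
    then show False using x(2)[of n] sums_unique2 \<rho>(1)[of n] by (fastforce simp: V_def)
  qed
  moreover have "x \<longlonglongrightarrow> 0"
  proof (rule Lim_null_comparison)
    show "\<forall>\<^sub>F n in sequentially. norm (x n) \<le> 2 * \<rho> n" using x(3) by simp
    show "(\<lambda>n. 2 * \<rho> n) \<longlonglongrightarrow> 0" unfolding \<rho>_def by real_asymp
  qed
  moreover have "(\<lambda>k. (v k - V k) * x n ^ k) sums 0" for n
    using sums_diff[OF x(1)[of n] x(2)[of n]] by (simp add: left_diff_distrib)
  ultimately have "v k - V k = 0" for k by (intro powser_coeffs_eq_0)
  then show ?thesis by (auto simp: V_def)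
qed

lemma v_coeff_eq_inv_coeff: "v_coeff d lam \<theta> k = inv_coeff (polar_coeff d lam) k \<theta>"
  unfolding v_coeff_def
  using the_equality[of "inv_expansion d lam \<theta>", OF inv_expansion_inv_coeff inv_expansion_unique] by simp

lemma poly_in_inv_coeff_polar: "poly_in d (\<lambda>lam. inv_coeff (polar_coeff d lam) k \<theta>)"
  by (rule cont_coeff_poly_poly_in[OF cont_coeff_poly_inv_coeff[OF cont_coeff_poly_polar_coeff]])

lemma poly_in_inv_coeff_sin: "poly_in d (\<lambda>lam. inv_coeff (sin_coeff d lam) k s)"
  by (rule cont_coeff_poly_poly_in[OF cont_coeff_poly_inv_coeff[OF cont_coeff_poly_sin_coeff]])

lemma even_part_in_ideal:
  obtains g where "\<And>i. i \<in> {1..(k - 1) div 2} \<Longrightarrow> poly_in d (g i)"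
    "\<And>lam. inv_coeff (polar_coeff d lam) k \<theta> - inv_coeff (polar_coeff d (odd_part lam)) k \<theta>
      = (\<Sum>i=1..(k - 1) div 2. lam (2 * i) * g i lam)"
proof (rule poly_in_vanishing_ideal)
  show "poly_in d (\<lambda>lam. inv_coeff (polar_coeff d lam) k \<theta> - inv_coeff (polar_coeff d (odd_part lam)) k \<theta>)"
    unfolding inv_coeff_polar_odd_part by (intro poly_in_diff poly_in_inv_coeff_polar poly_in_inv_coeff_sin)
  fix lam
  define z where "z = zero_on ((\<lambda>i. 2 * i) ` {1..(k - 1) div 2}) lam"
  have "odd_part z = odd_part lam" by (rule ext) (auto simp: z_def zero_on_def odd_part_def)
  moreover have "trunc d z i = trunc d (odd_part lam) i" if "i < k" for i
  proof (cases "odd i \<or> i = 0")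
    case False
    then obtain j where "i = 2 * j" "j \<in> {1..(k - 1) div 2}" using \<open>i < k\<close> by (auto elim!: evenE)
    then show ?thesis by (auto simp: z_def zero_on_def trunc_def odd_part_def)
  qed (auto simp: z_def zero_on_def trunc_def odd_part_def)
  ultimately show "inv_coeff (polar_coeff d z) k \<theta> - inv_coeff (polar_coeff d (odd_part z)) k \<theta> = 0"
    using inv_coeff_polar_coeff_cong[of k d z "odd_part lam" \<theta>] by simp
qed auto

lemma inv_coeff_sin_coeff_zero_on_odd:
  assumes "2 \<le> k"
  shows "inv_coeff (sin_coeff d (zero_on ((\<lambda>j. 2 * j + 1) ` {0..(k - 2) div 2}) lam)) k s = 0"
proof -
  have "trunc d (odd_part (zero_on ((\<lambda>j. 2 * j + 1) ` {0..(k - 2) div 2}) lam)) i = trunc d (odd_part (\<lambda>_. 0)) i"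
    if "i < k" for i
  proof (cases "odd i")
    case True
    then obtain j where "i = 2 * j + 1" by (rule oddE)
    with \<open>i < k\<close> have "i \<in> (\<lambda>j. 2 * j + 1) ` {0..(k - 2) div 2}" by auto
    then show ?thesis by (simp add: trunc_def odd_part_def zero_on_def)
  qed (simp add: trunc_def odd_part_def)
  then have "inv_coeff (sin_coeff d (zero_on ((\<lambda>j. 2 * j + 1) ` {0..(k - 2) div 2}) lam)) k s
      = inv_coeff (sin_coeff d (\<lambda>_. 0)) k s"
    by (rule inv_coeff_sin_coeff_cong)
  also have "\<dots> = 0" by (rule inv_coeff_sin_coeff_zero[OF assms])
  finally show ?thesis .
qed

lemma odd_part_decomposition:
  assumes "2 \<le> k"
  obtains w where "\<And>j s. j \<le> (k - 2) div 2 \<Longrightarrow> poly_in d (w j s)" "\<And>j lam. w j 0 lam = 0"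
    "\<And>s lam. inv_coeff (sin_coeff d lam) k s = (\<Sum>j=0..(k - 2) div 2. lam (2 * j + 1) * w j s lam)"
proof -
  let ?J = "{0..(k - 2) div 2}"
  have "\<forall>s. \<exists>g. (\<forall>j\<in>?J. poly_in d (g j)) \<and>
      (\<forall>lam. inv_coeff (sin_coeff d lam) k s = (\<Sum>j\<in>?J. lam (2 * j + 1) * g j lam))"
  proof
    fix s
    obtain g where "\<And>j. j \<in> ?J \<Longrightarrow> poly_in d (g j)"
      "\<And>lam. inv_coeff (sin_coeff d lam) k s = (\<Sum>j\<in>?J. lam (2 * j + 1) * g j lam)"
      by (rule poly_in_vanishing_ideal[where I = ?J and a = "\<lambda>j. 2 * j + 1"
            and P = "\<lambda>lam. inv_coeff (sin_coeff d lam) k s"])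
        (use inv_coeff_sin_coeff_zero_on_odd[OF assms] poly_in_inv_coeff_sin in auto)
    then show "\<exists>g. (\<forall>j\<in>?J. poly_in d (g j)) \<and>
        (\<forall>lam. inv_coeff (sin_coeff d lam) k s = (\<Sum>j\<in>?J. lam (2 * j + 1) * g j lam))"
      by blast
  qed
  then have "\<exists>G. \<forall>s. (\<forall>j\<in>?J. poly_in d (G s j)) \<and>
      (\<forall>lam. inv_coeff (sin_coeff d lam) k s = (\<Sum>j\<in>?J. lam (2 * j + 1) * G s j lam))"
    by (rule choice)
  then obtain G where G: "\<forall>s. (\<forall>j\<in>?J. poly_in d (G s j)) \<and>
      (\<forall>lam. inv_coeff (sin_coeff d lam) k s = (\<Sum>j\<in>?J. lam (2 * j + 1) * G s j lam))"
    by blast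
  text \<open>At \<open>s = 0\<close> all coefficients vanish, so the choice there is irrelevant.\<close>
  define w where "w j s = (if s = 0 then (\<lambda>_. 0) else G s j)" for j s
  show ?thesis
  proof
    show "poly_in d (w j s)" if "j \<le> (k - 2) div 2" for j s
      using G that poly_in_0 by (simp add: w_def)
    show "inv_coeff (sin_coeff d lam) k s = (\<Sum>j=0..(k - 2) div 2. lam (2 * j + 1) * w j s lam)" for s lam
      using G assms by (cases "s = 0") (simp_all add: w_def inv_coeff_at_0)
  qed (simp add: w_def)
qed

theorem lemmaI1:
  fixes d k :: nat
  assumes "1 \<le> d" and "2 \<le> k"
  defines "k0 \<equiv> (k - 1) div 2" and "k1 \<equiv> (k - 2) div 2"
  shows "\<exists>(f :: real \<Rightarrow> (nat \<Rightarrow> real) \<Rightarrow> real)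
           (w :: nat \<Rightarrow> real \<Rightarrow> (nat \<Rightarrow> real) \<Rightarrow> real).
     (\<forall>\<theta>. poly_in d (f \<theta>)) \<and>
     (\<forall>j\<le>k1. \<forall>s. poly_in d (w j s)) \<and>
     (\<forall>\<theta>. \<exists>g :: nat \<Rightarrow> (nat \<Rightarrow> real) \<Rightarrow> real.
          (\<forall>i\<in>{1..k0}. poly_in d (g i)) \<and>
          (\<forall>lam\<in>params d. f \<theta> lam = (\<Sum>i=1..k0. lam (2 * i) * g i lam))) \<and>
     (\<forall>j\<le>k1. \<forall>lam. w j 0 lam = 0) \<and>
     (\<forall>lam\<in>params d. \<forall>\<theta>.
        v_coeff d lam \<theta> k = f \<theta> lam + (\<Sum>j=0..k1. lam (2 * j + 1) * w j (sin \<theta>) lam))"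
proof -
  obtain w where w: "\<And>j s. j \<le> k1 \<Longrightarrow> poly_in d (w j s)" "\<And>j lam. w j 0 lam = 0"
    "\<And>s lam. inv_coeff (sin_coeff d lam) k s = (\<Sum>j=0..k1. lam (2 * j + 1) * w j s lam)"
    using odd_part_decomposition[OF \<open>2 \<le> k\<close>, of d] unfolding k1_def by blast
  define f where "f \<theta> lam = inv_coeff (polar_coeff d lam) k \<theta> - inv_coeff (polar_coeff d (odd_part lam)) k \<theta>"
    for \<theta> lam
  show ?thesis
  proof (intro exI[of _ f] exI[of _ w] conjI allI impI ballI)
    show "poly_in d (f \<theta>)" for \<theta>
      unfolding f_def[abs_def] inv_coeff_polar_odd_part
      by (intro poly_in_diff poly_in_inv_coeff_polar poly_in_inv_coeff_sin)
    show "\<exists>g. (\<forall>i\<in>{1..k0}. poly_in d (g i)) \<and> (\<forall>lam\<in>params d. f \<theta> lam = (\<Sum>i=1..k0. lam (2 * i) * g i lam))"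
      for \<theta>
    proof -
      obtain g where "\<And>i. i \<in> {1..k0} \<Longrightarrow> poly_in d (g i)" "\<And>lam. f \<theta> lam = (\<Sum>i=1..k0. lam (2 * i) * g i lam)"
        using even_part_in_ideal[of k d \<theta>] unfolding k0_def f_def by blast
      then show ?thesis by blast
    qed
    show "v_coeff d lam \<theta> k = f \<theta> lam + (\<Sum>j=0..k1. lam (2 * j + 1) * w j (sin \<theta>) lam)" for lam \<theta>
      by (simp add: v_coeff_eq_inv_coeff f_def inv_coeff_polar_odd_part w(3))
  qed (use w in auto)
qed

end
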